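(* Let $G=(V,E)$ with weight $\mu$ be an infinite, connected, locally finite weighted graph satisfying condition $(p_0)$, let $m>1$, and fix $o\in V$. Let $(p,q)\in G_1=\{(p,q): p\ge 0,\ m-1-p<q<m\}$. Suppose there exist constants $C>0$ and $n_1$ such that $$W_o(n)\le C\, n^{\frac{mp+q}{p+q-m+1}}(\ln n)^{\frac{m-1}{p+q-m+1}}\quad\text{for all } n\ge n_1.$$ Then the inequality $\Delta_m u+u^p|\nabla u|^q\le 0$ on $V$ admits no nontrivial positive solution.
   Context: Setting: $G=(V,E)$ is an infinite, connected, locally finite graph with no loops and no multiple edges; $x\sim y$ means $x$ and $y$ are joined by an edge. A weight is a symmetric function $\mu:V\times V\to[0,\infty)$ with $\mu_{xy}=\mu_{yx}>0$ if and only if $x\sim y$; the vertex measure is $\mu(x)=\sum_{y\sim x}\mu_{xy}$. For $m>1$ and $u:V\to\mathbb R$, $\Delta_m u(x)=\frac{1}{\mu(x)}\sum_{y\sim x}\mu_{xy}|u(y)-u(x)|^{m-2}(u(y)-u(x))$ and $|\nabla u(x)|=\big(\sum_{y\sim x}\frac{\mu_{xy}}{2\mu(x)}(u(y)-u(x))^2\big)^{1/2}$. Condition $(p_0)$: there is a constant $p_0>1$ such that $\mu_{xy}/\mu(x)\ge 1/p_0$ for all $x\sim y$. $d(x,y)$ is the graph (shortest path) distance, $B(o,n)=\{x\in V: d(o,x)\le n\}$, and $W_o(n)=\sum_{x\in B(o,n),\,y\in V,\,d(o,x)<d(o,y)}\mu_{xy}$. A nontrivial positive solution of $\Delta_m u+u^p|\nabla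 u|^q\le 0$ is a non-constant function $u:V\to(0,\infty)$ such that $\Delta_m u(x)+u(x)^p|\nabla u(x)|^q\le 0$ for every $x\in V$, with the conventions $0^0=1$, $0^q=0$ for $q>0$, and, for $q<0$, $|\nabla u(x)|^q=+\infty$ when $|\nabla u(x)|=0$ (so the inequality fails at such $x$). *)

theory Defs
  imports "HOL-Analysis.Analysis"
begin

text \<open>A weighted graph on the vertex type 'v is given by its weight function mu;
  x ~ y iff mu x y > 0.\<close>

definition adj :: "('v \<Rightarrow> 'v \<Rightarrow> real) \<Rightarrow> 'v \<Rightarrow> 'v \<Rightarrow> bool" where
  "adj mu x y \<longleftrightarrow> mu x y > 0"

definition nbrs :: "('v \<Rightarrow> 'v \<Rightarrow> real) \<Rightarrow> 'v \<Rightarrow> 'v set" where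
  "nbrs mu x = {y. adj mu x y}"

definition edge_rel :: "('v \<Rightarrow> 'v \<Rightarrow> real) \<Rightarrow> ('v \<times> 'v) set" where
  "edge_rel mu = {(x, y). adj mu x y}"

definition weighted_graph :: "('v \<Rightarrow> 'v \<Rightarrow> real) \<Rightarrow> bool" where
  "weighted_graph mu \<longleftrightarrow>
     infinite (UNIV :: 'v set) \<and>
     (\<forall>x y. mu x y = mu y x) \<and>
     (\<forall>x y. mu x y \<ge> 0) \<and>
     (\<forall>x. mu x x = 0) \<and>
     (\<forall>x. finite (nbrs mu x)) \<and>
     (\<forall>x y. (x, y) \<in> (edge_rel mu)\<^sup>*)"

definition vmeasure :: "('v \<Rightarrow> 'v \<Rightarrow> real) \<Rightarrow> 'v \<Rightarrow> real" where
  "vmeasure mu x = (\<Sum>y\<in>nbrs mu x. mu x y)"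

definition cond_p0 :: "('v \<Rightarrow> 'v \<Rightarrow> real) \<Rightarrow> bool" where
  "cond_p0 mu \<longleftrightarrow> (\<exists>p0::real. p0 > 1 \<and>
     (\<forall>x y. adj mu x y \<longrightarrow> mu x y / vmeasure mu x \<ge> 1 / p0))"

definition gdist :: "('v \<Rightarrow> 'v \<Rightarrow> real) \<Rightarrow> 'v \<Rightarrow> 'v \<Rightarrow> nat" where
  "gdist mu x y = (LEAST n. (x, y) \<in> edge_rel mu ^^ n)"

definition gball :: "('v \<Rightarrow> 'v \<Rightarrow> real) \<Rightarrow> 'v \<Rightarrow> nat \<Rightarrow> 'v set" where
  "gball mu x0 n = {x. gdist mu x0 x \<le> n}"

text \<open>W_o(n) = sum of mu_xy over x in B(o,n), y in V with d(o,x) < d(o,y).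
  Only neighbours y of x contribute (mu_xy = 0 otherwise).\<close>
definition W :: "('v \<Rightarrow> 'v \<Rightarrow> real) \<Rightarrow> 'v \<Rightarrow> nat \<Rightarrow> real" where
  "W mu x0 n = (\<Sum>(x, y)\<in>{(x, y). x \<in> gball mu x0 n \<and> adj mu x y \<and> gdist mu x0 x < gdist mu x0 y}. mu x y)"

definition mlap :: "('v \<Rightarrow> 'v \<Rightarrow> real) \<Rightarrow> real \<Rightarrow> ('v \<Rightarrow> real) \<Rightarrow> 'v \<Rightarrow> real" where
  "mlap mu m u x = (1 / vmeasure mu x) *
     (\<Sum>y\<in>nbrs mu x. mu x y * \<bar>u y - u x\<bar> powr (m - 2) * (u y - u x))"

definition grad :: "('v \<Rightarrow> 'v \<Rightarrow> real) \<Rightarrow> ('v \<Rightarrow> real) \<Rightarrow> 'v \<Rightarrow> real" where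
  "grad mu u x = sqrt (\<Sum>y\<in>nbrs mu x. mu x y / (2 * vmeasure mu x) * (u y - u x)\<^sup>2)"

text \<open>|grad u x|^q with conventions 0^0 = 1, 0^q = 0 for q > 0; for q < 0 and zero
  gradient the inequality is required to fail (handled in the predicate below).\<close>
definition gradpow :: "('v \<Rightarrow> 'v \<Rightarrow> real) \<Rightarrow> real \<Rightarrow> ('v \<Rightarrow> real) \<Rightarrow> 'v \<Rightarrow> real" where
  "gradpow mu q u x = (if q = 0 then 1 else grad mu u x powr q)"

definition nontrivial_pos_solution ::
  "('v \<Rightarrow> 'v \<Rightarrow> real) \<Rightarrow> real \<Rightarrow> real \<Rightarrow> real \<Rightarrow> ('v \<Rightarrow> real) \<Rightarrow> bool" where
  "nontrivial_pos_solution mu m p q u \<longleftrightarrow>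
     (\<forall>x. u x > 0) \<and> (\<exists>x y. u x \<noteq> u y) \<and>
     (\<forall>x. (q < 0 \<longrightarrow> grad mu u x \<noteq> 0) \<and>
          mlap mu m u x + u x powr p * gradpow mu q u x \<le> 0)"

end

theory Submission
  imports Defs
begin

(* Test the inequality against u^(-t) phi^s, where phi is the logarithmic cut-off equal to 1 on
   B(o,n) and to 0 outside B(o,n^2), s is the critical exponent (mp+q)/(p+q-m+1) and t = 1/ln n.
   Summation by parts, a Harnack inequality between neighbours (from condition (p0)), a
   three-factor Hoelder inequality and absorption of the gradient term bound the weighted source
   sum over B(o,n^2) by a power of the energy of phi times a positive power of the same sum over
   the annulus n <= d(o,x) <= n^2. With t = 1/ln n the volume bound on W_o makes the energy
   factor bounded uniformly in n. Hence sum_V mu(x) u^p |grad u|^q is finite, its annular tails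
   tend to 0, and so u^p |grad u|^q vanishes identically; this forces u to be constant, or
   contradicts the convention for q < 0. *)

section \<open>Real inequalities\<close>

lemma powr_mean_value:
  fixes a b e :: real
  assumes "0 < a" "a < b"
  shows "\<exists>z. a < z \<and> z < b \<and> b powr e - a powr e = (b - a) * (e * z powr (e - 1))"
proof -
  have deriv: "\<forall>x. a \<le> x \<and> x \<le> b \<longrightarrow> ((\<lambda>x. x powr e) has_real_derivative e * x powr (e - 1)) (at x)"
    using assms by (auto intro!: derivative_eq_intros)
  then have "\<forall>x. a \<le> x \<and> x \<le> b \<longrightarrow> isCont (\<lambda>x. x powr e) x"
    using DERIV_isCont by blast
  with deriv assms show ?thesis
    using MVT2[of a b "\<lambda>x. x powr e" "\<lambda>x. e * x powr (e - 1)"] by blast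
qed

lemma diff_mult_diff_powr_neg_le:
  fixes a b t :: real
  assumes "0 < a" "0 < b" "0 < t"
  shows "(b - a) * (b powr (-t) - a powr (-t)) \<le> - t * (b - a)\<^sup>2 * (max a b) powr (-t - 1)"
proof -
  have ordered: "(y - x) * (y powr (-t) - x powr (-t)) \<le> - t * (y - x)\<^sup>2 * y powr (-t - 1)"
    if xy: "0 < x" "x < y" for x y :: real
  proof -
    obtain z where z: "x < z" "z < y" "y powr (-t) - x powr (-t) = (y - x) * (-t * z powr (-t - 1))"
      using powr_mean_value[OF xy, of "-t"] by auto
    have "y powr (-t - 1) \<le> z powr (-t - 1)"
      using z xy assms by (intro powr_mono2') auto
    then have "(y - x)\<^sup>2 * (t * y powr (-t - 1)) \<le> (y - x)\<^sup>2 * (t * z powr (-t - 1))"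
      using assms by (intro mult_left_mono) auto
    then show ?thesis
      unfolding z(3) by (simp add: power2_eq_square algebra_simps)
  qed
  show ?thesis
  proof (cases a b rule: linorder_cases)
    case less
    then show ?thesis using ordered[of a b] assms by (simp add: max_def)
  next
    case greater
    then show ?thesis using ordered[of b a] assms
      by (simp add: max_def power2_commute algebra_simps)
  qed simp
qed

lemma powr_diff_le_mult:
  fixes a b s :: real
  assumes "0 \<le> b" "b < a" "1 \<le> s"
  shows "a powr s - b powr s \<le> s * a powr (s - 1) * (a - b)"
proof (cases "b = 0")
  case True
  have "a powr s = a powr (s - 1) * a" using assms by (simp add: powr_diff)
  moreover have "a powr (s - 1) * a \<le> s * a powr (s - 1) * a"
    using assms by (intro mult_right_mono) (auto intro!: mult_right_mono[of 1 s, simplified])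
  ultimately show ?thesis using True assms by simp
next
  case False
  then have "0 < b" using assms by simp
  then obtain z where z: "b < z" "z < a" "a powr s - b powr s = (a - b) * (s * z powr (s - 1))"
    using powr_mean_value[of b a s] assms by blast
  have "z powr (s - 1) \<le> a powr (s - 1)"
    using z assms \<open>0 < b\<close> by (intro powr_mono2) auto
  then have "(a - b) * (s * z powr (s - 1)) \<le> (a - b) * (s * a powr (s - 1))"
    using assms by (intro mult_left_mono) auto
  then show ?thesis using z by (simp add: algebra_simps)
qed

lemma powr_neg_diff_Suc_le:
  fixes j l :: real
  assumes "0 < j" "0 < l"
  shows "j powr (-l) - (j + 1) powr (-l) \<le> l * j powr (-l - 1)"
proof -
  obtain z where z: "j < z" "(j + 1) powr (-l) - j powr (-l) = -l * z powr (-l - 1)"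
    using powr_mean_value[of j "j + 1" "-l"] assms by auto
  have "z powr (-l - 1) \<le> j powr (-l - 1)"
    using z assms by (intro powr_mono2') auto
  then have "l * z powr (-l - 1) \<le> l * j powr (-l - 1)"
    using assms by simp
  then show ?thesis using z(2) by linarith
qed

lemma weighted_am_gm3:
  fixes a b c x y z :: real
  assumes "0 < x" "0 < y" "0 < z" "x + y + z = 1" "0 \<le> a" "0 \<le> b" "0 \<le> c"
  shows "a powr x * b powr y * c powr z \<le> x * a + y * b + z * c"
proof (cases "a = 0 \<or> b = 0 \<or> c = 0")
  case True
  then show ?thesis using assms by auto
next
  case False
  then have pos: "0 < a" "0 < b" "0 < c" using assms by auto
  define w where "w = y + z"
  have w: "0 < w" using assms by (simp add: w_def)
  have "a powr x * b powr y * c powr z = a powr x * (b powr (y / w) * c powr (z / w)) powr w"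
    using w pos by (simp add: powr_mult powr_powr)
  also have "\<dots> \<le> x * a + w * (b powr (y / w) * c powr (z / w))"
    using Youngs_inequality_0[of x w a "b powr (y / w) * c powr (z / w)"] assms w pos
    by (simp add: w_def)
  also have "\<dots> \<le> x * a + w * ((y / w) * b + (z / w) * c)"
  proof -
    have "b powr (y / w) * c powr (z / w) \<le> (y / w) * b + (z / w) * c"
      using Youngs_inequality_0[of "y / w" "z / w" b c] assms w pos
      by (simp add: w_def add_divide_distrib[symmetric])
    then show ?thesis using w by simp
  qed
  also have "\<dots> = x * a + y * b + z * c"
    using w by (simp add: algebra_simps)
  finally show ?thesis .
qed

lemma sum_holder3:
  fixes w a b c :: "'i \<Rightarrow> real" and x y z :: real
  assumes "finite I" "\<And>i. i \<in> I \<Longrightarrow> 0 \<le> w i" "\<And>i. i \<in> I \<Longrightarrow> 0 \<le> a i"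
    "\<And>i. i \<in> I \<Longrightarrow> 0 \<le> b i" "\<And>i. i \<in> I \<Longrightarrow> 0 \<le> c i"
    "0 < x" "0 < y" "0 < z" "x + y + z = 1"
  shows "(\<Sum>i\<in>I. w i * (a i powr x * b i powr y * c i powr z))
     \<le> (\<Sum>i\<in>I. w i * a i) powr x * (\<Sum>i\<in>I. w i * b i) powr y * (\<Sum>i\<in>I. w i * c i) powr z"
proof -
  define SA where "SA = (\<Sum>i\<in>I. w i * a i)"
  define SB where "SB = (\<Sum>i\<in>I. w i * b i)"
  define SC where "SC = (\<Sum>i\<in>I. w i * c i)"
  have nonneg: "0 \<le> SA" "0 \<le> SB" "0 \<le> SC"
    unfolding SA_def SB_def SC_def using assms by (auto intro!: sum_nonneg)
  show ?thesis
  proof (cases "SA = 0 \<or> SB = 0 \<or> SC = 0")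
    case True
    then have "w i * (a i powr x * b i powr y * c i powr z) = 0" if "i \<in> I" for i
      using that assms unfolding SA_def SB_def SC_def by (auto simp: sum_nonneg_eq_0_iff)
    then have "(\<Sum>i\<in>I. w i * (a i powr x * b i powr y * c i powr z)) = 0"
      by (intro sum.neutral) blast
    then show ?thesis by simp
  next
    case False
    then have pos: "0 < SA" "0 < SB" "0 < SC" using nonneg by auto
    have "(\<Sum>i\<in>I. w i * (a i powr x * b i powr y * c i powr z)) / (SA powr x * SB powr y * SC powr z)
        = (\<Sum>i\<in>I. w i * ((a i / SA) powr x * (b i / SB) powr y * (c i / SC) powr z))"
      unfolding sum_divide_distrib
      by (intro sum.cong refl) (use assms pos in \<open>simp add: powr_divide\<close>)
    also have "\<dots> \<le> (\<Sum>i\<in>I. w i * (x * (a i / SA) + y * (b i / SB) + z * (c i / SC)))"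
      using assms pos by (intro sum_mono mult_left_mono weighted_am_gm3) auto
    also have "\<dots> = (x / SA) * SA + (y / SB) * SB + (z / SC) * SC"
      by (simp add: SA_def SB_def SC_def sum.distrib sum_distrib_left sum_divide_distrib algebra_simps)
    also have "\<dots> = 1" using pos assms by simp
    finally show ?thesis
      using pos by (simp add: divide_le_eq SA_def SB_def SC_def)
  qed
qed

lemma absorb_powr_le:
  fixes A B c D \<beta> :: real
  assumes "0 \<le> A" "0 \<le> B" "0 < c" "0 \<le> D" "0 < \<beta>" "\<beta> < 1"
    and le: "A + c * B \<le> D * B powr \<beta>"
  shows "A \<le> (D * c powr (-\<beta>)) powr (1 / (1 - \<beta>))"
proof -
  define R where "R = A + c * B"
  have "A \<le> R" "0 \<le> R" using assms by (simp_all add: R_def)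
  show ?thesis
  proof (cases "R = 0")
    case True
    then show ?thesis using \<open>A \<le> R\<close> by (metis order_trans powr_ge_zero)
  next
    case False
    then have R: "0 < R" using \<open>0 \<le> R\<close> by simp
    have "B \<le> R / c" using assms by (simp add: R_def field_simps)
    then have "B powr \<beta> \<le> (R / c) powr \<beta>" using assms by (intro powr_mono2) auto
    also have "\<dots> = R powr \<beta> * c powr (-\<beta>)" using R assms by (simp add: powr_divide powr_minus field_simps)
    finally have "D * B powr \<beta> \<le> D * (R powr \<beta> * c powr (-\<beta>))"
      using assms by (intro mult_left_mono) auto
    then have "R \<le> (D * c powr (-\<beta>)) * R powr \<beta>"
      using le by (simp add: R_def algebra_simps)
    then have "R powr (1 - \<beta>) \<le> D * c powr (-\<beta>)"
      using R by (simp add: powr_diff divide_le_eq)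
    then have "(R powr (1 - \<beta>)) powr (1 / (1 - \<beta>)) \<le> (D * c powr (-\<beta>)) powr (1 / (1 - \<beta>))"
      using assms by (intro powr_mono2) auto
    then show ?thesis using R assms \<open>A \<le> R\<close> by (simp add: powr_powr)
  qed
qed

lemma powr_neg_split_le:
  fixes y t t1 \<theta> :: real
  assumes "0 < y" "0 < t" "t \<le> t1" "0 < \<theta>"
  shows "y powr (-t) \<le> \<theta> powr (-t) + \<theta> powr (t1 - t) * y powr (-t1)"
proof (cases "\<theta> \<le> y")
  case True
  then have "y powr (-t) \<le> \<theta> powr (-t)" using assms by (intro powr_mono2') auto
  then show ?thesis by (smt (verit) powr_ge_zero mult_nonneg_nonneg)
next
  case False
  have "y powr (-t) = y powr (-t1) * y powr (t1 - t)" using assms by (simp add: powr_add[symmetric])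
  also have "\<dots> \<le> y powr (-t1) * \<theta> powr (t1 - t)"
    using False assms by (intro mult_left_mono powr_mono2) auto
  finally show ?thesis by (smt (verit) powr_ge_zero mult.commute)
qed

lemma powr_le_max_1:
  fixes x e :: real
  assumes "0 \<le> x" "0 < e" "e \<le> 1"
  shows "x powr e \<le> max 1 x"
proof (cases "x \<le> 1")
  case True
  then show ?thesis using powr_le1[of e x] assms by simp
next
  case False
  then have "x powr e \<le> x powr 1" using assms by (intro powr_mono) auto
  then show ?thesis using False by simp
qed

lemma flux_test_diff_le:
  fixes a b P Q t m :: real
  assumes "0 < a" "0 < b" "0 \<le> P" "0 \<le> Q" "0 < t"
  shows "\<bar>b - a\<bar> powr (m - 2) * (b - a) * (b powr (-t) * Q - a powr (-t) * P)
    \<le> - t * (\<bar>b - a\<bar> powr m * (max a b) powr (-t - 1) * max P Q)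
       + \<bar>b - a\<bar> powr (m - 1) * (min a b) powr (-t) * \<bar>Q - P\<bar>"
proof (cases "a = b")
  case True
  then show ?thesis by simp
next
  case False
  define d where "d = \<bar>b - a\<bar>"
  define H where "H = d powr (m - 2)"
  have d: "0 < d" using False by (simp add: d_def)
  have Hd: "H * d = d powr (m - 1)"
    using d powr_add[of d "m - 2" 1] by (simp add: H_def)
  have Hd2: "H * (b - a)\<^sup>2 = d powr m"
    using d powr_add[of d "m - 2" 2] by (simp add: H_def d_def powr_numeral)
  \<comment> \<open>Expand around the larger of \<open>P, Q\<close>: that part has a sign since \<open>x powr (-t)\<close> decreases.\<close>
  obtain c where c: "c = a \<or> c = b"
    and split: "b powr (-t) * Q - a powr (-t) * P = max P Q * (b powr (-t) - a powr (-t)) + c powr (-t) * (Q - P)"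
  proof (cases "P \<le> Q")
    case True
    then show ?thesis using that[of a] by (simp add: max_def algebra_simps)
  next
    case False
    then show ?thesis using that[of b] by (simp add: max_def algebra_simps)
  qed
  have "H * max P Q * ((b - a) * (b powr (-t) - a powr (-t)))
      \<le> H * max P Q * (- t * (b - a)\<^sup>2 * (max a b) powr (-t - 1))"
    using diff_mult_diff_powr_neg_le[of a b t] assms by (intro mult_left_mono) (auto simp: H_def)
  also have "\<dots> = - t * (d powr m * (max a b) powr (-t - 1) * max P Q)"
    by (simp flip: Hd2 add: algebra_simps)
  finally have 1: "H * (b - a) * (max P Q * (b powr (-t) - a powr (-t)))
      \<le> - t * (d powr m * (max a b) powr (-t - 1) * max P Q)"
    by (simp add: algebra_simps)
  have "H * (b - a) * (c powr (-t) * (Q - P)) \<le> H * d * (c powr (-t) * \<bar>Q - P\<bar>)"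
    using abs_ge_self[of "H * (b - a) * (c powr (-t) * (Q - P))"]
    by (simp add: abs_mult d_def H_def)
  also have "\<dots> \<le> H * d * ((min a b) powr (-t) * \<bar>Q - P\<bar>)"
    using c assms d by (intro mult_left_mono mult_right_mono powr_mono2') (auto simp: H_def)
  finally have 2: "H * (b - a) * (c powr (-t) * (Q - P)) \<le> d powr (m - 1) * (min a b) powr (-t) * \<bar>Q - P\<bar>"
    by (simp add: Hd mult.assoc)
  show ?thesis
    using 1 2 unfolding split distrib_left H_def d_def by linarith
qed

lemma sum_symmetric_eq_2_sum_less:
  fixes G :: "'a \<Rightarrow> 'a \<Rightarrow> real" and \<phi> :: "'a \<Rightarrow> real"
  assumes sym: "\<And>x y. G y x = G x y" and vanish: "\<And>x y. \<phi> x = \<phi> y \<Longrightarrow> G x y = 0"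
  shows "(\<Sum>x\<in>F. \<Sum>y\<in>F. G x y) = 2 * (\<Sum>x\<in>F. \<Sum>y\<in>F. if \<phi> y < \<phi> x then G x y else 0)"
proof -
  have split: "G x y = (if \<phi> y < \<phi> x then G x y else 0) + (if \<phi> x < \<phi> y then G x y else 0)" for x y
    using vanish[of x y] by auto
  have "(\<Sum>x\<in>F. \<Sum>y\<in>F. G x y) = (\<Sum>x\<in>F. \<Sum>y\<in>F. if \<phi> y < \<phi> x then G x y else 0)
      + (\<Sum>x\<in>F. \<Sum>y\<in>F. if \<phi> x < \<phi> y then G x y else 0)"
    by (subst split) (simp only: sum.distrib)
  also have "(\<Sum>x\<in>F. \<Sum>y\<in>F. if \<phi> x < \<phi> y then G x y else 0)
      = (\<Sum>x\<in>F. \<Sum>y\<in>F. if \<phi> y < \<phi> x then G x y else 0)"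
    by (subst sum.swap) (intro sum.cong refl, metis sym)
  finally show ?thesis by simp
qed

lemma sum_by_parts_le:
  fixes a h :: "nat \<Rightarrow> real"
  assumes a: "\<And>k. 0 \<le> a k" and h: "\<And>j. 0 \<le> h j" "\<And>j. n \<le> j \<Longrightarrow> h (Suc j) \<le> h j"
    and "n \<le> N"
  shows "(\<Sum>k\<in>{n..N}. a k * h k)
    \<le> h N * (\<Sum>k\<le>N. a k) + (\<Sum>j\<in>{n..<N}. (h j - h (Suc j)) * (\<Sum>k\<le>j. a k))"
proof -
  have abel: "(\<Sum>k\<in>{n..n + d}. a k * h k)
    = h (n + d) * (\<Sum>k\<in>{n..n + d}. a k) + (\<Sum>j\<in>{n..<n + d}. (h j - h (Suc j)) * (\<Sum>k\<in>{n..j}. a k))" for d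
    by (induction d) (simp_all add: algebra_simps)
  obtain d where d: "N = n + d" using \<open>n \<le> N\<close> le_Suc_ex by blast
  have partial: "(\<Sum>k\<in>{n..j}. a k) \<le> (\<Sum>k\<le>j. a k)" for j
    using a by (intro sum_mono2) auto
  show ?thesis
    unfolding d abel using partial h by (intro add_mono mult_left_mono sum_mono) auto
qed

lemma sum_inverse_le_ln:
  fixes n N :: nat
  assumes "2 \<le> n" "n \<le> N"
  shows "(\<Sum>j\<in>{n..N}. 1 / real j) \<le> ln (real N)"
proof -
  have step: "1 / real j \<le> ln (real j) - ln (real j - 1)" if "2 \<le> j" for j
  proof -
    have "ln ((real j - 1) / real j) \<le> (real j - 1) / real j - 1"
      using that by (intro ln_le_minus_one) auto
    then show ?thesis using that by (simp add: ln_div field_simps)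
  qed
  have telescope: "(\<Sum>j\<in>{n..n + k}. 1 / real j) \<le> ln (real (n + k)) - ln (real n - 1)" for k
  proof (induction k)
    case 0
    then show ?case using step[of n] assms by simp
  next
    case (Suc k)
    then show ?case using step[of "n + Suc k"] assms by simp
  qed
  obtain d where d: "N = n + d" using assms le_Suc_ex by blast
  have "0 \<le> ln (real n - 1)" using assms by simp
  then show ?thesis using telescope[of d] unfolding d by linarith
qed

lemma sum_mult_powr_neg_le:
  fixes a :: "nat \<Rightarrow> real"
  assumes a: "\<And>k. 0 \<le> a k" and n: "2 \<le> n" "n \<le> N" and lam: "0 < lam"
    and partial: "\<And>j. n \<le> j \<Longrightarrow> j \<le> N \<Longrightarrow> real j powr (-lam) * (\<Sum>k\<le>j. a k) \<le> Q"
  shows "(\<Sum>k\<in>{n..N}. a k * real k powr (-lam)) \<le> Q * (1 + lam * ln (real N))"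
proof -
  define h where "h k = real k powr (-lam)" for k
  have "0 \<le> real n powr (-lam) * (\<Sum>k\<le>n. a k)"
    using a by (simp add: sum_nonneg)
  then have Q: "0 \<le> Q"
    using partial[of n] n by linarith
  have h_anti: "h (Suc j) \<le> h j" if "n \<le> j" for j
    unfolding h_def using that n lam by (intro powr_mono2') auto
  have "(\<Sum>k\<in>{n..N}. a k * h k)
      \<le> h N * (\<Sum>k\<le>N. a k) + (\<Sum>j\<in>{n..<N}. (h j - h (Suc j)) * (\<Sum>k\<le>j. a k))"
    using n a h_anti by (intro sum_by_parts_le) (simp_all add: h_def)
  also have "\<dots> \<le> Q + (\<Sum>j\<in>{n..<N}. lam * Q * (1 / real j))"
  proof (intro add_mono sum_mono)
    show "h N * (\<Sum>k\<le>N. a k) \<le> Q" using partial[of N] n by (simp add: h_def)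
  next
    fix j assume j: "j \<in> {n..<N}"
    then have jpos: "0 < real j" using n by simp
    have "h j - h (Suc j) \<le> lam * h j * (1 / real j)"
      using powr_neg_diff_Suc_le[of "real j" lam] jpos lam
      by (simp add: h_def add.commute powr_diff powr_minus_divide)
    then have "(h j - h (Suc j)) * (\<Sum>k\<le>j. a k) \<le> lam * h j * (1 / real j) * (\<Sum>k\<le>j. a k)"
      using a by (intro mult_right_mono) (auto intro: sum_nonneg)
    also have "\<dots> = lam * (1 / real j) * (h j * (\<Sum>k\<le>j. a k))"
      by (simp add: algebra_simps)
    also have "\<dots> \<le> lam * (1 / real j) * Q"
      using partial[of j] j lam jpos by (intro mult_left_mono) (auto simp: h_def)
    finally show "(h j - h (Suc j)) * (\<Sum>k\<le>j. a k) \<le> lam * Q * (1 / real j)"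
      by (simp add: algebra_simps)
  qed
  also have "(\<Sum>j\<in>{n..<N}. lam * Q * (1 / real j)) \<le> lam * Q * ln (real N)"
  proof -
    have "(\<Sum>j\<in>{n..<N}. 1 / real j) \<le> (\<Sum>j\<in>{n..N}. 1 / real j)" by (intro sum_mono2) auto
    also have "\<dots> \<le> ln (real N)" using sum_inverse_le_ln n by blast
    finally have "lam * Q * (\<Sum>j\<in>{n..<N}. 1 / real j) \<le> lam * Q * ln (real N)"
      using lam Q by (intro mult_left_mono) auto
    then show ?thesis by (simp add: sum_distrib_left)
  qed
  finally show ?thesis by (simp add: h_def algebra_simps)
qed

lemma le_powr_inverse_if_le_self_powr:
  fixes A M \<alpha> \<beta> \<gamma> :: real
  assumes "0 \<le> A" "1 \<le> M" "0 < \<alpha>" "0 < \<gamma>" "\<alpha> + \<beta> + \<gamma> = 1"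
    and le: "A \<le> (M * A powr \<alpha>) powr (1 / (1 - \<beta>))"
  shows "A \<le> M powr (1 / \<gamma>)"
proof (cases "A = 0")
  case False
  then have A: "0 < A" using assms by simp
  have b: "0 < 1 - \<beta>" using assms by linarith
  have "A powr (1 - \<beta>) \<le> ((M * A powr \<alpha>) powr (1 / (1 - \<beta>))) powr (1 - \<beta>)"
    using le A b by (intro powr_mono2) auto
  also have "\<dots> = M * A powr \<alpha>"
    using b assms A by (simp add: powr_powr)
  also have "1 - \<beta> = \<gamma> + \<alpha>" using assms by linarith
  finally have "A powr \<gamma> * A powr \<alpha> \<le> M * A powr \<alpha>"
    by (simp add: powr_add)
  then have "A powr \<gamma> \<le> M"
    using A by simp
  then have "(A powr \<gamma>) powr (1 / \<gamma>) \<le> M powr (1 / \<gamma>)"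
    using assms by (intro powr_mono2) auto
  then show ?thesis using A assms by (simp add: powr_powr)
qed simp

section \<open>The logarithmic cut-off\<close>

lemma one_le_ln_of_nat: "3 \<le> n \<Longrightarrow> 1 \<le> ln (real n)"
  using exp_le by (subst ln_ge_iff) auto

definition log_cutoff :: "nat \<Rightarrow> nat \<Rightarrow> real" where
  "log_cutoff n k = min 1 (max 0 (2 - ln (real k) / ln (real n)))"

lemma log_cutoff_bounds: "0 \<le> log_cutoff n k" "log_cutoff n k \<le> 1"
  by (auto simp: log_cutoff_def)

lemma log_cutoff_Suc_le:
  assumes "2 \<le> n"
  shows "log_cutoff n (Suc k) \<le> log_cutoff n k"
proof (cases "k = 0")
  case False
  then have "ln (real k) / ln (real n) \<le> ln (real (Suc k)) / ln (real n)"
    using assms by (intro divide_right_mono) auto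
  then show ?thesis unfolding log_cutoff_def by linarith
qed (simp add: log_cutoff_def)

lemma log_cutoff_eq_1:
  assumes "2 \<le> n" "k \<le> n"
  shows "log_cutoff n k = 1"
proof (cases "k = 0")
  case False
  then have "ln (real k) / ln (real n) \<le> 1" using assms by simp
  then show ?thesis unfolding log_cutoff_def by simp
qed (simp add: log_cutoff_def)

lemma log_cutoff_eq_0:
  assumes "2 \<le> n" "n\<^sup>2 \<le> k"
  shows "log_cutoff n k = 0"
proof -
  have "0 < k" using assms by (metis le_0_eq not_less power_eq_0_iff zero_less_numeral gr0I)
  then have "ln (real (n\<^sup>2)) \<le> ln (real k)"
    using assms by simp
  moreover have "ln (real (n\<^sup>2)) = 2 * ln (real n)"
    using assms by (simp add: ln_realpow)
  ultimately have "2 * ln (real n) \<le> ln (real k)" by simp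
  then have "2 \<le> ln (real k) / ln (real n)" using assms by (simp add: le_divide_eq)
  then show ?thesis unfolding log_cutoff_def by simp
qed

lemma log_cutoff_Suc_eq:
  assumes "3 \<le> n" "k < n \<or> n\<^sup>2 \<le> k"
  shows "log_cutoff n (Suc k) = log_cutoff n k"
  using assms log_cutoff_eq_1[of n k] log_cutoff_eq_1[of n "Suc k"] log_cutoff_eq_0[of n k]
    log_cutoff_eq_0[of n "Suc k"] by auto

lemma log_cutoff_diff_le:
  assumes "2 \<le> n" "1 \<le> k"
  shows "log_cutoff n k - log_cutoff n (Suc k) \<le> 1 / (real k * ln (real n))"
proof -
  have clip: "min 1 (max 0 a) - min 1 (max 0 b) \<le> max 0 (a - b)" for a b :: real
    by (simp add: min_def max_def)
  have "1 + 1 / real k = real (Suc k) / real k"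
    using assms by (simp add: field_simps)
  then have "ln (real (Suc k)) - ln (real k) = ln (1 + 1 / real k)"
    using assms by (simp add: ln_div)
  also have "\<dots> \<le> 1 / real k"
    using assms by (intro ln_add_one_self_le_self) auto
  finally have "(ln (real (Suc k)) - ln (real k)) / ln (real n) \<le> (1 / real k) / ln (real n)"
    using assms by (intro divide_right_mono) auto
  then have le: "(2 - ln (real k) / ln (real n)) - (2 - ln (real (Suc k)) / ln (real n))
      \<le> 1 / (real k * ln (real n))"
    by (simp add: diff_divide_distrib)
  have "log_cutoff n k - log_cutoff n (Suc k)
      \<le> max 0 ((2 - ln (real k) / ln (real n)) - (2 - ln (real (Suc k)) / ln (real n)))"
    unfolding log_cutoff_def by (rule clip)
  also have "\<dots> \<le> 1 / (real k * ln (real n))"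
    using le assms by simp
  finally show ?thesis .
qed


lemma sum_log_cutoff_diff_powr_le:
  fixes a :: "nat \<Rightarrow> real"
  assumes n: "3 \<le> n" and a: "\<And>k. 0 \<le> a k" and lam: "0 < lam"
  shows "(\<Sum>k\<le>n\<^sup>2. a k * (log_cutoff n k - log_cutoff n (Suc k)) powr lam)
    \<le> ln (real n) powr (-lam) * (\<Sum>k\<in>{n..n\<^sup>2 - 1}. a k * real k powr (-lam))"
proof -
  define L where "L = ln (real n)"
  have L: "0 < L" using n by (simp add: L_def)
  have "(\<Sum>k\<le>n\<^sup>2. a k * (log_cutoff n k - log_cutoff n (Suc k)) powr lam)
      = (\<Sum>k\<in>{n..n\<^sup>2 - 1}. a k * (log_cutoff n k - log_cutoff n (Suc k)) powr lam)"
  proof (rule sum.mono_neutral_right)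
    show "\<forall>k\<in>{..n\<^sup>2} - {n..n\<^sup>2 - 1}. a k * (log_cutoff n k - log_cutoff n (Suc k)) powr lam = 0"
    proof
      fix k assume "k \<in> {..n\<^sup>2} - {n..n\<^sup>2 - 1}"
      then have "k < n \<or> n\<^sup>2 \<le> k" by auto
      then show "a k * (log_cutoff n k - log_cutoff n (Suc k)) powr lam = 0"
        using log_cutoff_Suc_eq[OF n] by simp
    qed
  qed auto
  also have "\<dots> \<le> (\<Sum>k\<in>{n..n\<^sup>2 - 1}. a k * (L powr (-lam) * real k powr (-lam)))"
  proof (intro sum_mono mult_left_mono a)
    fix k assume "k \<in> {n..n\<^sup>2 - 1}"
    then have "1 \<le> k" using n by auto
    then have "(log_cutoff n k - log_cutoff n (Suc k)) powr lam \<le> (1 / (real k * L)) powr lam"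
      using log_cutoff_diff_le[of n k] log_cutoff_Suc_le[of n k] n lam
      by (intro powr_mono2) (auto simp: L_def)
    also have "\<dots> = L powr (-lam) * real k powr (-lam)"
      using L \<open>1 \<le> k\<close> by (simp add: powr_divide powr_mult powr_minus_divide)
    finally show "(log_cutoff n k - log_cutoff n (Suc k)) powr lam \<le> L powr (-lam) * real k powr (-lam)" .
  qed
  also have "\<dots> = L powr (-lam) * (\<Sum>k\<in>{n..n\<^sup>2 - 1}. a k * real k powr (-lam))"
    by (simp add: sum_distrib_left algebra_simps)
  finally show ?thesis by (simp add: L_def)
qed
section \<open>Rooted weighted graphs\<close>

locale rooted_graph =
  fixes mu :: "'v \<Rightarrow> 'v \<Rightarrow> real" and x0 :: 'v
  assumes weighted_graph: "weighted_graph mu"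
begin

definition r :: "'v \<Rightarrow> nat" where "r x = gdist mu x0 x"

definition B :: "nat \<Rightarrow> 'v set" where "B n = gball mu x0 n"

lemma mu_sym: "mu x y = mu y x"
  using weighted_graph by (simp add: weighted_graph_def)

lemma mu_nonneg: "0 \<le> mu x y"
  using weighted_graph by (simp add: weighted_graph_def)

lemma finite_nbrs: "finite (nbrs mu x)"
  using weighted_graph by (simp add: weighted_graph_def)

lemma connected: "(x, y) \<in> (edge_rel mu)\<^sup>*"
  using weighted_graph by (simp add: weighted_graph_def)

lemma adj_iff: "adj mu x y \<longleftrightarrow> mu x y \<noteq> 0"
  using mu_nonneg[of x y] by (auto simp: adj_def)

lemma adj_sym: "adj mu x y \<longleftrightarrow> adj mu y x"
  by (simp add: adj_def mu_sym)

lemma nbrs_iff: "y \<in> nbrs mu x \<longleftrightarrow> adj mu x y"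
  by (simp add: nbrs_def)

lemma edge_rel_iff: "(x, y) \<in> edge_rel mu \<longleftrightarrow> adj mu x y"
  by (simp add: edge_rel_def)

lemma ex_adj: "\<exists>y. adj mu x y"
proof -
  have "infinite (UNIV :: 'v set)"
    using weighted_graph by (simp add: weighted_graph_def)
  then obtain y where "y \<noteq> x"
    by (metis finite.intros(1) finite_insert insert_iff subsetI finite_subset)
  from connected[of x y] this show ?thesis
    by (cases rule: converse_rtranclE) (auto simp: edge_rel_iff)
qed

lemma vmeasure_pos: "0 < vmeasure mu x"
proof -
  obtain y where "adj mu x y" using ex_adj by blast
  then show ?thesis
    unfolding vmeasure_def using finite_nbrs[of x]
    by (intro sum_pos2[of _ y]) (auto simp: nbrs_iff adj_def mu_nonneg)
qed

lemma vmeasure_nonneg: "0 \<le> vmeasure mu x"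
  using vmeasure_pos[of x] by simp

lemma const_if_const_on_edges:
  assumes "\<And>x y. adj mu x y \<Longrightarrow> g y = g x"
  shows "g y = g x"
  using connected[of x y] by (induction rule: rtrancl_induct) (auto simp: edge_rel_iff dest: assms)

lemma relpow_r: "(x0, x) \<in> edge_rel mu ^^ r x"
proof -
  obtain n where "(x0, x) \<in> edge_rel mu ^^ n" using connected[of x0 x] rtrancl_power by blast
  then show ?thesis unfolding r_def gdist_def by (rule LeastI)
qed

lemma r_le_relpow: "(x0, x) \<in> edge_rel mu ^^ n \<Longrightarrow> r x \<le> n"
  unfolding r_def gdist_def by (rule Least_le)

lemma r_adj_le: "adj mu x y \<Longrightarrow> r y \<le> Suc (r x)"
  using relpow_r[of x] by (intro r_le_relpow) (auto simp: edge_rel_iff)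

lemma mem_B_iff: "x \<in> B n \<longleftrightarrow> r x \<le> n"
  by (simp add: B_def gball_def r_def)

lemma B_mono: "n \<le> k \<Longrightarrow> B n \<subseteq> B k"
  by (auto simp: mem_B_iff)

lemma nbrs_subset_B_Suc: "r x \<le> n \<Longrightarrow> nbrs mu x \<subseteq> B (Suc n)"
  using r_adj_le by (fastforce simp: mem_B_iff nbrs_iff)

lemma finite_B: "finite (B n)"
proof (induction n)
  case 0
  have "B 0 \<subseteq> {x0}"
    using relpow_r by (auto simp: mem_B_iff) (metis relpow_0_E)
  then show ?case using finite_subset by blast
next
  case (Suc n)
  have "B (Suc n) \<subseteq> B n \<union> (\<Union>x\<in>B n. nbrs mu x)"
  proof
    fix y assume "y \<in> B (Suc n)"
    show "y \<in> B n \<union> (\<Union>x\<in>B n. nbrs mu x)"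
    proof (cases "r y \<le> n")
      case False
      with \<open>y \<in> B (Suc n)\<close> have "r y = Suc n"
        by (simp add: mem_B_iff)
      then have "(x0, y) \<in> edge_rel mu ^^ Suc n"
        using relpow_r[of y] by simp
      then obtain z where "(x0, z) \<in> edge_rel mu ^^ n" "(z, y) \<in> edge_rel mu"
        by (rule relpow_Suc_E)
      then show ?thesis
        using r_le_relpow by (auto simp: mem_B_iff edge_rel_iff nbrs_iff)
    qed (simp add: mem_B_iff)
  qed
  then show ?case
    using Suc finite_nbrs by (meson finite_UN_I finite_Un finite_subset)
qed

lemma sum_nbrs_eq_superset:
  "finite F \<Longrightarrow> nbrs mu x \<subseteq> F \<Longrightarrow> (\<Sum>y\<in>nbrs mu x. mu x y * G y) = (\<Sum>y\<in>F. mu x y * G y)"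
  by (rule sum.mono_neutral_left) (auto simp: nbrs_iff adj_iff)

lemma sum_mu_le_vmeasure: "finite F \<Longrightarrow> (\<Sum>y\<in>F. mu x y) \<le> vmeasure mu x"
proof -
  assume F: "finite F"
  have "(\<Sum>y\<in>F. mu x y) = (\<Sum>y\<in>F \<inter> nbrs mu x. mu x y)"
    using F by (intro sum.mono_neutral_right) (auto simp: nbrs_iff adj_iff)
  also have "\<dots> \<le> (\<Sum>y\<in>nbrs mu x. mu x y)"
    using finite_nbrs by (intro sum_mono2) (auto simp: mu_nonneg)
  finally show ?thesis by (simp add: vmeasure_def)
qed

definition cutoff_energy :: "('v \<Rightarrow> real) \<Rightarrow> real \<Rightarrow> 'v set \<Rightarrow> real" where
  "cutoff_energy \<phi> lam F = (\<Sum>x\<in>F. \<Sum>y\<in>F. if \<phi> y < \<phi> x then mu x y * (\<phi> x - \<phi> y) powr lam else 0)"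

lemma cutoff_energy_nonneg: "0 \<le> cutoff_energy \<phi> lam F"
  unfolding cutoff_energy_def using mu_nonneg by (intro sum_nonneg) auto


lemma sum_descending_edges_le:
  assumes F: "finite F" and X: "X \<subseteq> F" and Xcov: "\<And>x y. adj mu x y \<Longrightarrow> \<phi> y < \<phi> x \<Longrightarrow> x \<in> X"
    and h: "\<And>x. 0 \<le> h x"
  shows "(\<Sum>xy\<in>F \<times> F. (if \<phi> (snd xy) < \<phi> (fst xy) then mu (fst xy) (snd xy) else 0) * h (fst xy))
    \<le> (\<Sum>x\<in>X. vmeasure mu x * h x)"
proof -
  have row: "(\<Sum>y\<in>F. if \<phi> y < \<phi> x then mu x y else 0) \<le> (if x \<in> X then vmeasure mu x else 0)" for x
  proof (cases "x \<in> X")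
    case True
    have "(\<Sum>y\<in>F. if \<phi> y < \<phi> x then mu x y else 0) \<le> (\<Sum>y\<in>F. mu x y)"
      by (intro sum_mono) (simp add: mu_nonneg)
    also have "\<dots> \<le> vmeasure mu x" by (rule sum_mu_le_vmeasure[OF F])
    finally show ?thesis using True by simp
  next
    case False
    then have "(if \<phi> y < \<phi> x then mu x y else 0) = 0" for y
      using Xcov[of x y] by (auto simp: adj_iff)
    then show ?thesis using False by simp
  qed
  have "(\<Sum>xy\<in>F \<times> F. (if \<phi> (snd xy) < \<phi> (fst xy) then mu (fst xy) (snd xy) else 0) * h (fst xy))
      = (\<Sum>x\<in>F. (\<Sum>y\<in>F. if \<phi> y < \<phi> x then mu x y else 0) * h x)"
    by (simp add: sum.cartesian_product split_def sum_distrib_right)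
  also have "\<dots> \<le> (\<Sum>x\<in>F. (if x \<in> X then vmeasure mu x else 0) * h x)"
    using row h by (intro sum_mono mult_right_mono) auto
  also have "\<dots> = (\<Sum>x\<in>F. if x \<in> X then vmeasure mu x * h x else 0)"
    by (intro sum.cong) auto
  also have "\<dots> = (\<Sum>x\<in>X. vmeasure mu x * h x)"
    using X F by (simp add: sum.inter_restrict[symmetric] Int_absorb1)
  finally show ?thesis .
qed

end

section \<open>Positive solutions: Harnack inequality and gradient bounds\<close>

locale positive_solution = rooted_graph mu x0 for mu :: "'v \<Rightarrow> 'v \<Rightarrow> real" and x0 :: 'v +
  fixes m p q p0 :: real and u :: "'v \<Rightarrow> real"
  assumes m_gt_1: "1 < m" and p0_gt_1: "1 < p0"
    and p0_bound: "\<And>x y. adj mu x y \<Longrightarrow> 1 / p0 \<le> mu x y / vmeasure mu x"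
    and solution: "nontrivial_pos_solution mu m p q u"
begin

abbreviation grad_u :: "'v \<Rightarrow> real" where "grad_u \<equiv> grad mu u"

definition flux :: "'v \<Rightarrow> 'v \<Rightarrow> real" where
  "flux x y = \<bar>u y - u x\<bar> powr (m - 2) * (u y - u x)"

definition source :: "'v \<Rightarrow> real" where
  "source x = u x powr p * gradpow mu q u x"

definition K :: real where "K = 1 + p0 powr (1 / (m - 1))"

lemma u_pos: "0 < u x"
  using solution by (simp add: nontrivial_pos_solution_def)

lemma mlap_add_source_nonpos: "mlap mu m u x + source x \<le> 0"
  using solution by (simp add: nontrivial_pos_solution_def source_def)

lemma source_nonneg: "0 \<le> source x"
  using u_pos by (simp add: source_def gradpow_def)

lemma K_ge_1: "1 \<le> K"
  by (simp add: K_def)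

lemma K_pos: "0 < K"
  using K_ge_1 by simp

lemma flux_antisym: "flux y x = - flux x y"
  by (simp add: flux_def abs_minus_commute algebra_simps)

lemma vmeasure_mult_mlap: "vmeasure mu x * mlap mu m u x = (\<Sum>y\<in>nbrs mu x. mu x y * flux x y)"
  using vmeasure_pos[of x] by (simp add: mlap_def flux_def sum_distrib_left mult.assoc)

lemma vmeasure_le_mu: "adj mu x y \<Longrightarrow> vmeasure mu x / p0 \<le> mu x y"
  using p0_bound[of x y] vmeasure_pos[of x] p0_gt_1 by (simp add: field_simps)

lemma flux_eq_powr: "u x \<le> u y \<Longrightarrow> flux x y = (u y - u x) powr (m - 1)"
  using m_gt_1 powr_add[of "u y - u x" "m - 2" 1] by (cases "u x = u y") (simp_all add: flux_def)

lemma flux_lower_bound: "- (u x powr (m - 1)) \<le> flux x y"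
proof (cases "u x \<le> u y")
  case True
  then show ?thesis using flux_eq_powr[OF True] by (smt (verit) powr_ge_zero)
next
  case False
  then have "flux x y = - ((u x - u y) powr (m - 1))"
    using flux_eq_powr[of y x] flux_antisym[of x y] by simp
  moreover have "(u x - u y) powr (m - 1) \<le> u x powr (m - 1)"
    using False u_pos[of y] m_gt_1 by (intro powr_mono2) auto
  ultimately show ?thesis by simp
qed

text \<open>The inequality gives \<open>\<Sum>y. mu x y * flux x y \<le> 0\<close> and every negative flux term is at least
  \<open>- u x powr (m - 1)\<close>, so the single term at \<open>y\<close> is at most \<open>vmeasure mu x * u x powr (m - 1)\<close>;
  condition \<open>(p0)\<close> turns this into a bound on \<open>u y - u x\<close>.\<close>

lemma harnack: 
  assumes "adj mu x y"
  shows "u y \<le> K * u x"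
proof (cases "u y \<le> u x")
  case True
  moreover have "1 * u x \<le> K * u x"
    using K_ge_1 u_pos[of x] by (intro mult_right_mono) auto
  ultimately show ?thesis by simp
next
  case False
  define d where "d = u y - u x"
  have d: "0 < d" using False by (simp add: d_def)
  have "(\<Sum>z\<in>nbrs mu x. mu x z * flux x z) \<le> 0"
    using mlap_add_source_nonpos[of x] source_nonneg[of x] vmeasure_pos[of x]
    by (simp flip: vmeasure_mult_mlap add: mult_nonneg_nonpos)
  have "mu x y * (flux x y + u x powr (m - 1))
      \<le> (\<Sum>z\<in>nbrs mu x. mu x z * (flux x z + u x powr (m - 1)))"
  proof -
    have "0 \<le> flux x z + u x powr (m - 1)" for z
      using flux_lower_bound[of x z] by linarith
    then show ?thesis
      using assms finite_nbrs[of x] mu_nonneg by (intro member_le_sum mult_nonneg_nonneg) (auto simp: nbrs_iff)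
  qed
  also have "\<dots> = (\<Sum>z\<in>nbrs mu x. mu x z * flux x z) + vmeasure mu x * u x powr (m - 1)"
    by (simp add: vmeasure_def algebra_simps sum.distrib sum_distrib_right)
  also have "\<dots> \<le> vmeasure mu x * u x powr (m - 1)"
    using \<open>(\<Sum>z\<in>nbrs mu x. mu x z * flux x z) \<le> 0\<close> by simp
  finally have "mu x y * d powr (m - 1) \<le> vmeasure mu x * u x powr (m - 1)"
    using flux_eq_powr[of x y] False mu_nonneg[of x y] unfolding d_def
    by (smt (verit) mult_left_mono powr_ge_zero)
  moreover have "vmeasure mu x / p0 * d powr (m - 1) \<le> mu x y * d powr (m - 1)"
    using vmeasure_le_mu[OF assms] by (intro mult_right_mono) auto
  ultimately have "vmeasure mu x / p0 * d powr (m - 1) \<le> vmeasure mu x * u x powr (m - 1)"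
    by simp
  then have "d powr (m - 1) \<le> p0 * u x powr (m - 1)"
    using vmeasure_pos[of x] p0_gt_1 by (simp add: field_simps)
  then have "(d powr (m - 1)) powr (1 / (m - 1)) \<le> (p0 * u x powr (m - 1)) powr (1 / (m - 1))"
    using m_gt_1 by (intro powr_mono2) auto
  then have "d \<le> p0 powr (1 / (m - 1)) * u x"
    using m_gt_1 d u_pos[of x] p0_gt_1 by (simp add: powr_powr powr_mult)
  then show ?thesis by (simp add: K_def d_def algebra_simps)
qed

lemma harnack_lower: "adj mu x y \<Longrightarrow> u x / K \<le> u y"
  using harnack[of y x] adj_sym K_ge_1 by (simp add: field_simps)

lemma grad_sum_nonneg: "0 \<le> (\<Sum>y\<in>nbrs mu x. mu x y / (2 * vmeasure mu x) * (u y - u x)\<^sup>2)"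
  by (intro sum_nonneg mult_nonneg_nonneg divide_nonneg_pos) (auto simp: mu_nonneg vmeasure_pos)

lemma grad_u_sq: "(grad_u x)\<^sup>2 = (\<Sum>y\<in>nbrs mu x. mu x y / (2 * vmeasure mu x) * (u y - u x)\<^sup>2)"
  using grad_sum_nonneg[of x] by (simp only: grad_def real_sqrt_pow2)

lemma grad_u_nonneg: "0 \<le> grad_u x"
  using grad_sum_nonneg[of x] unfolding grad_def by (rule real_sqrt_ge_zero)

lemma abs_diff_le_grad_u:
  assumes "adj mu x y"
  shows "\<bar>u y - u x\<bar> \<le> sqrt (2 * p0) * grad_u x"
proof -
  have "(u y - u x)\<^sup>2 / (2 * p0) = (u y - u x)\<^sup>2 * (1 / p0) / 2"
    by simp
  also have "\<dots> \<le> (u y - u x)\<^sup>2 * (mu x y / vmeasure mu x) / 2"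
    using p0_bound[OF assms] by (intro divide_right_mono mult_left_mono) auto
  also have "\<dots> = mu x y / (2 * vmeasure mu x) * (u y - u x)\<^sup>2"
    by (simp add: ac_simps)
  also have "\<dots> \<le> (grad_u x)\<^sup>2"
    unfolding grad_u_sq using assms finite_nbrs[of x] vmeasure_pos[of x] mu_nonneg
    by (intro member_le_sum) (auto simp: nbrs_iff)
  finally have "(u y - u x)\<^sup>2 \<le> 2 * p0 * (grad_u x)\<^sup>2"
    using p0_gt_1 by (simp add: pos_divide_le_eq mult.commute)
  then have "sqrt ((u y - u x)\<^sup>2) \<le> sqrt (2 * p0 * (grad_u x)\<^sup>2)"
    by (rule real_sqrt_le_mono)
  then show ?thesis
    using grad_u_nonneg[of x] p0_gt_1 by (simp add: real_sqrt_mult)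
qed

lemma ex_adj_grad_u_le: "\<exists>y. adj mu x y \<and> grad_u x \<le> \<bar>u y - u x\<bar>"
proof -
  define M where "M = Max ((\<lambda>y. \<bar>u y - u x\<bar>) ` nbrs mu x)"
  have "nbrs mu x \<noteq> {}" using ex_adj[of x] by (auto simp: nbrs_iff)
  then have "M \<in> (\<lambda>y. \<bar>u y - u x\<bar>) ` nbrs mu x"
    unfolding M_def using finite_nbrs[of x] by (intro Max_in) auto
  then obtain y where y: "y \<in> nbrs mu x" "M = \<bar>u y - u x\<bar>" by blast
  have "(grad_u x)\<^sup>2 \<le> (\<Sum>z\<in>nbrs mu x. mu x z / (2 * vmeasure mu x) * M\<^sup>2)"
    unfolding grad_u_sq
  proof (intro sum_mono mult_left_mono)
    fix z assume z: "z \<in> nbrs mu x"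
    have "\<bar>u z - u x\<bar> \<le> M"
      unfolding M_def using z finite_nbrs[of x] by (intro Max_ge) auto
    then show "(u z - u x)\<^sup>2 \<le> M\<^sup>2"
      using power_mono[of "\<bar>u z - u x\<bar>" M 2] by simp
    show "0 \<le> mu x z / (2 * vmeasure mu x)"
      using vmeasure_pos[of x] mu_nonneg[of x z] by simp
  qed
  also have "\<dots> = M\<^sup>2 / 2"
    using vmeasure_pos[of x]
    by (simp add: sum_distrib_right[symmetric] sum_divide_distrib[symmetric] vmeasure_def[symmetric])
  also have "\<dots> \<le> M\<^sup>2" by simp
  finally have "grad_u x \<le> M"
    using y grad_u_nonneg[of x] abs_le_square_iff[of "grad_u x" M] by simp
  then show ?thesis using y by (auto simp: nbrs_iff)
qed

lemma vmeasure_grad_u_powr_le: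
  "vmeasure mu x * grad_u x powr m \<le> p0 * (\<Sum>y\<in>nbrs mu x. mu x y * \<bar>u y - u x\<bar> powr m)"
proof -
  obtain y where y: "adj mu x y" "grad_u x \<le> \<bar>u y - u x\<bar>" using ex_adj_grad_u_le by blast
  have "vmeasure mu x * grad_u x powr m \<le> vmeasure mu x * \<bar>u y - u x\<bar> powr m"
    using y grad_u_nonneg[of x] m_gt_1 vmeasure_pos[of x] by (intro mult_left_mono powr_mono2) auto
  also have "\<dots> \<le> p0 * mu x y * \<bar>u y - u x\<bar> powr m"
    using vmeasure_le_mu[OF y(1)] p0_gt_1 by (intro mult_right_mono) (auto simp: field_simps)
  also have "\<dots> \<le> p0 * (\<Sum>y\<in>nbrs mu x. mu x y * \<bar>u y - u x\<bar> powr m)"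
    using y finite_nbrs[of x] p0_gt_1 mu_nonneg
    by (subst mult.assoc, intro mult_left_mono member_le_sum) (auto simp: nbrs_iff)
  finally show ?thesis .
qed

lemma source_eq: "0 < grad_u x \<Longrightarrow> source x = u x powr p * grad_u x powr q"
  by (simp add: source_def gradpow_def)

lemma ex_source_ne_0: "\<exists>x. source x \<noteq> 0"
proof (rule ccontr)
  assume "\<not> (\<exists>x. source x \<noteq> 0)"
  then have source_0: "source x = 0" for x by blast
  have gradpow_0: "gradpow mu q u x = 0" for x
    using source_0[of x] u_pos[of x] by (simp add: source_def)
  then have "q \<noteq> 0"
    by (auto simp: gradpow_def)
  then have grad_0: "grad_u x = 0" for x
    using gradpow_0[of x] by (simp add: gradpow_def)
  show False
  proof (cases "q < 0")
    case True
    then show False using solution grad_0 by (simp add: nontrivial_pos_solution_def)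
  next
    case False
    have "u y = u x" if "adj mu x y" for x y
      using abs_diff_le_grad_u[OF that] grad_0[of x] by simp
    then have "u y = u x" for x y
      by (rule const_if_const_on_edges)
    then show False using solution by (simp add: nontrivial_pos_solution_def)
  qed
qed

end

section \<open>Testing the inequality against \<open>u powr (-t) * \<Phi>\<close>\<close>

context positive_solution
begin

lemma sum_mlap_mult_eq:
  assumes F: "finite F" and supp: "\<And>x. \<eta> x \<noteq> 0 \<Longrightarrow> x \<in> F \<and> nbrs mu x \<subseteq> F"
  shows "(\<Sum>x\<in>F. vmeasure mu x * mlap mu m u x * \<eta> x)
      = (1/2) * (\<Sum>x\<in>F. \<Sum>y\<in>F. mu x y * flux x y * (\<eta> x - \<eta> y))"
proof -
  define S where "S = (\<Sum>x\<in>F. \<Sum>y\<in>F. mu x y * flux x y * \<eta> x)"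
  have lhs: "(\<Sum>x\<in>F. vmeasure mu x * mlap mu m u x * \<eta> x) = S"
    unfolding S_def
  proof (intro sum.cong refl)
    fix x assume "x \<in> F"
    show "vmeasure mu x * mlap mu m u x * \<eta> x = (\<Sum>y\<in>F. mu x y * flux x y * \<eta> x)"
    proof (cases "\<eta> x = 0")
      case False
      then have "nbrs mu x \<subseteq> F" using supp by blast
      then have "vmeasure mu x * mlap mu m u x = (\<Sum>y\<in>F. mu x y * flux x y)"
        using vmeasure_mult_mlap[of x] sum_nbrs_eq_superset[OF F, of x "flux x"] by simp
      then show ?thesis by (simp add: sum_distrib_right)
    qed simp
  qed
  have swapped: "(\<Sum>x\<in>F. \<Sum>y\<in>F. mu x y * flux x y * \<eta> y) = - S"
  proof -
    have "(\<Sum>x\<in>F. \<Sum>y\<in>F. mu x y * flux x y * \<eta> y) = (\<Sum>y\<in>F. \<Sum>x\<in>F. mu x y * flux x y * \<eta> y)"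
      by (rule sum.swap)
    also have "\<dots> = (\<Sum>y\<in>F. \<Sum>x\<in>F. - (mu y x * flux y x * \<eta> y))"
    proof (intro sum.cong refl)
      fix y x show "mu x y * flux x y * \<eta> y = - (mu y x * flux y x * \<eta> y)"
        using flux_antisym[of y x] mu_sym[of x y] by simp
    qed
    also have "\<dots> = - S" by (simp add: S_def sum_negf)
    finally show ?thesis .
  qed
  have "(\<Sum>x\<in>F. \<Sum>y\<in>F. mu x y * flux x y * (\<eta> x - \<eta> y))
      = S - (\<Sum>x\<in>F. \<Sum>y\<in>F. mu x y * flux x y * \<eta> y)"
    by (simp add: S_def algebra_simps sum_subtractf)
  then show ?thesis using lhs swapped by simp
qed

lemma test_function_inequality:
  assumes F: "finite F" and \<Phi>: "\<And>x. 0 \<le> \<Phi> x"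
    and supp: "\<And>x. \<Phi> x \<noteq> 0 \<Longrightarrow> x \<in> F \<and> nbrs mu x \<subseteq> F" and t: "0 < t"
  shows "(\<Sum>x\<in>F. vmeasure mu x * source x * u x powr (-t) * \<Phi> x)
     + (t/2) * (\<Sum>x\<in>F. \<Sum>y\<in>F. mu x y * (\<bar>u y - u x\<bar> powr m * (max (u x) (u y)) powr (-t - 1) * max (\<Phi> x) (\<Phi> y)))
   \<le> (1/2) * (\<Sum>x\<in>F. \<Sum>y\<in>F. mu x y * (\<bar>u y - u x\<bar> powr (m - 1) * (min (u x) (u y)) powr (-t) * \<bar>\<Phi> y - \<Phi> x\<bar>))"
proof -
  define \<eta> where "\<eta> x = u x powr (-t) * \<Phi> x" for x
  have supp': "\<eta> x \<noteq> 0 \<Longrightarrow> x \<in> F \<and> nbrs mu x \<subseteq> F" for x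
    using supp by (auto simp: \<eta>_def)
  define X where "X x y = \<bar>u y - u x\<bar> powr m * (max (u x) (u y)) powr (-t - 1) * max (\<Phi> x) (\<Phi> y)" for x y
  define Y where "Y x y = \<bar>u y - u x\<bar> powr (m - 1) * (min (u x) (u y)) powr (-t) * \<bar>\<Phi> y - \<Phi> x\<bar>" for x y
  have "(\<Sum>x\<in>F. vmeasure mu x * source x * u x powr (-t) * \<Phi> x)
      \<le> (\<Sum>x\<in>F. - (vmeasure mu x * mlap mu m u x * \<eta> x))"
  proof (intro sum_mono)
    fix x
    have "source x \<le> - mlap mu m u x" using mlap_add_source_nonpos[of x] by simp
    moreover have "0 \<le> vmeasure mu x * (u x powr (-t) * \<Phi> x)"
      using vmeasure_pos[of x] \<Phi>[of x] by simp
    ultimately have "vmeasure mu x * (u x powr (-t) * \<Phi> x) * source x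
        \<le> vmeasure mu x * (u x powr (-t) * \<Phi> x) * (- mlap mu m u x)"
      by (intro mult_left_mono)
    then show "vmeasure mu x * source x * u x powr (-t) * \<Phi> x
        \<le> - (vmeasure mu x * mlap mu m u x * \<eta> x)"
      by (simp add: \<eta>_def algebra_simps)
  qed
  also have "\<dots> = (1/2) * (\<Sum>x\<in>F. \<Sum>y\<in>F. mu x y * flux x y * (\<eta> y - \<eta> x))"
  proof -
    have "mu x y * flux x y * (\<eta> y - \<eta> x) = - (mu x y * flux x y * (\<eta> x - \<eta> y))" for x y
      by (simp add: algebra_simps)
    then show ?thesis using sum_mlap_mult_eq[of F \<eta>] F supp' by (simp add: sum_negf)
  qed
  also have "\<dots> \<le> (1/2) * (\<Sum>x\<in>F. \<Sum>y\<in>F. - t * (mu x y * X x y) + mu x y * Y x y)"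
  proof (intro mult_left_mono sum_mono)
    fix x y
    have "flux x y * (\<eta> y - \<eta> x) \<le> - t * X x y + Y x y"
      unfolding flux_def \<eta>_def X_def Y_def
      using flux_test_diff_le[of "u x" "u y" "\<Phi> x" "\<Phi> y" t m] u_pos \<Phi> t by simp
    then have "mu x y * (flux x y * (\<eta> y - \<eta> x)) \<le> mu x y * (- t * X x y + Y x y)"
      using mu_nonneg[of x y] by (rule mult_left_mono)
    then show "mu x y * flux x y * (\<eta> y - \<eta> x) \<le> - t * (mu x y * X x y) + mu x y * Y x y"
      by (simp add: algebra_simps)
  qed simp
  also have "\<dots> = - (t/2) * (\<Sum>x\<in>F. \<Sum>y\<in>F. mu x y * X x y) + (1/2) * (\<Sum>x\<in>F. \<Sum>y\<in>F. mu x y * Y x y)"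
    by (simp add: sum.distrib sum_distrib_left sum_subtractf sum_negf algebra_simps)
  finally show ?thesis by (simp add: X_def Y_def)
qed

end

context positive_solution
begin

definition weighted_source :: "real \<Rightarrow> real \<Rightarrow> ('v \<Rightarrow> real) \<Rightarrow> 'v set \<Rightarrow> real" where
  "weighted_source t s \<phi> S = (\<Sum>x\<in>S. vmeasure mu x * source x * u x powr (-t) * \<phi> x powr s)"

definition gradient_mass :: "real \<Rightarrow> real \<Rightarrow> ('v \<Rightarrow> real) \<Rightarrow> 'v set \<Rightarrow> real" where
  "gradient_mass t s \<phi> S = (\<Sum>x\<in>S. vmeasure mu x * grad_u x powr m * u x powr (-1 - t) * \<phi> x powr s)"

definition cross_sum :: "real \<Rightarrow> real \<Rightarrow> ('v \<Rightarrow> real) \<Rightarrow> 'v set \<Rightarrow> real" where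
  "cross_sum t s \<phi> F = (\<Sum>x\<in>F. \<Sum>y\<in>F. if \<phi> y < \<phi> x
     then mu x y * (grad_u x powr (m - 1) * u x powr (-t) * \<phi> x powr (s - 1) * (\<phi> x - \<phi> y)) else 0)"

definition cross_const :: "real \<Rightarrow> real" where
  "cross_const s = sqrt (2 * p0) powr (m - 1) * K * s"

definition gradient_const :: "real \<Rightarrow> real" where
  "gradient_const t = t / (2 * K\<^sup>2 * p0)"

lemma weighted_source_nonneg: "0 \<le> weighted_source t s \<phi> S"
  unfolding weighted_source_def using vmeasure_pos source_nonneg
  by (intro sum_nonneg mult_nonneg_nonneg) (auto intro: less_imp_le)

lemma gradient_mass_nonneg: "0 \<le> gradient_mass t s \<phi> S"
  unfolding gradient_mass_def using vmeasure_pos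
  by (intro sum_nonneg mult_nonneg_nonneg) (auto intro: less_imp_le)

lemma cross_const_nonneg: "0 \<le> s \<Longrightarrow> 0 \<le> cross_const s"
  unfolding cross_const_def using K_pos by (intro mult_nonneg_nonneg) auto

lemma gradient_const_pos: "0 < t \<Longrightarrow> 0 < gradient_const t"
  using K_pos p0_gt_1 by (simp add: gradient_const_def)

lemma powr_neg_le_K_max:
  assumes "adj mu x y" "0 < t" "t \<le> 1"
  shows "u x powr (-1 - t) \<le> K\<^sup>2 * (max (u x) (u y)) powr (-t - 1)"
proof -
  have "1 * u x \<le> K * u x"
    using K_ge_1 u_pos[of x] by (intro mult_right_mono) auto
  then have max_le: "max (u x) (u y) \<le> K * u x"
    using harnack[OF assms(1)] by simp
  have "K\<^sup>2 * K powr (-2) = 1"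
    using K_pos by (simp add: powr_minus powr_numeral)
  moreover have "-1 - t = -t - 1" by simp
  ultimately have "u x powr (-1 - t) = K\<^sup>2 * (K powr (-2) * u x powr (-t - 1))"
    by (metis mult.assoc mult_1)
  also have "\<dots> \<le> K\<^sup>2 * (K powr (-t - 1) * u x powr (-t - 1))"
    using K_ge_1 assms by (intro mult_left_mono mult_right_mono powr_mono) auto
  also have "K powr (-t - 1) * u x powr (-t - 1) = (K * u x) powr (-t - 1)"
    using K_pos u_pos[of x] by (simp add: powr_mult)
  also have "K\<^sup>2 * (K * u x) powr (-t - 1) \<le> K\<^sup>2 * (max (u x) (u y)) powr (-t - 1)"
    using max_le u_pos[of x] assms by (intro mult_left_mono powr_mono2') auto
  finally show ?thesis .
qed

lemma gradient_term_le:
  assumes F: "finite F" and x: "x \<in> F" and supp: "\<phi> x \<noteq> 0 \<Longrightarrow> nbrs mu x \<subseteq> F"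
    and \<phi>: "0 \<le> \<phi> x" and t: "0 < t" "t \<le> 1" and s: "0 < s"
  shows "vmeasure mu x * grad_u x powr m * u x powr (-1 - t) * \<phi> x powr s
    \<le> K\<^sup>2 * p0 * (\<Sum>y\<in>F. mu x y * (\<bar>u y - u x\<bar> powr m * (max (u x) (u y)) powr (-t - 1)
        * max (\<phi> x powr s) (\<phi> y powr s)))"
proof (cases "\<phi> x = 0")
  case True
  have "0 \<le> (\<Sum>y\<in>F. mu x y * (\<bar>u y - u x\<bar> powr m * (max (u x) (u y)) powr (-t - 1)
      * max (\<phi> x powr s) (\<phi> y powr s)))"
    using mu_nonneg by (intro sum_nonneg mult_nonneg_nonneg) (auto simp: le_max_iff_disj)
  then show ?thesis using True p0_gt_1 by simp
next
  case False
  define c where "c = u x powr (-1 - t) * \<phi> x powr s"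
  have "vmeasure mu x * grad_u x powr m * c \<le> p0 * (\<Sum>y\<in>F. mu x y * \<bar>u y - u x\<bar> powr m) * c"
    using vmeasure_grad_u_powr_le[of x] sum_nbrs_eq_superset[OF F supp[OF False]]
    by (intro mult_right_mono) (auto simp: c_def)
  also have "\<dots> = p0 * (\<Sum>y\<in>F. mu x y * (\<bar>u y - u x\<bar> powr m * c))"
    by (simp add: sum_distrib_right mult.assoc)
  also have "\<dots> \<le> p0 * (\<Sum>y\<in>F. mu x y * (\<bar>u y - u x\<bar> powr m * (K\<^sup>2 * (max (u x) (u y)) powr (-t - 1)
      * max (\<phi> x powr s) (\<phi> y powr s))))"
  proof -
    have "mu x y * (\<bar>u y - u x\<bar> powr m * c) \<le> mu x y * (\<bar>u y - u x\<bar> powr m * (K\<^sup>2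
        * (max (u x) (u y)) powr (-t - 1) * max (\<phi> x powr s) (\<phi> y powr s)))" for y
    proof (cases "adj mu x y")
      case True
      then show ?thesis
        unfolding c_def using powr_neg_le_K_max[OF True t] mu_nonneg[of x y]
        by (intro mult_left_mono mult_mono) auto
    qed (simp add: adj_iff)
    then show ?thesis using p0_gt_1 by (intro mult_left_mono[OF sum_mono]) auto
  qed
  finally show ?thesis
    by (simp add: c_def sum_distrib_left algebra_simps)
qed

lemma cross_term_le:
  assumes \<phi>: "\<And>x. 0 \<le> \<phi> x" "\<And>x. \<phi> x \<le> 1" and lt: "\<phi> y < \<phi> x"
    and t: "0 < t" "t \<le> 1" and s: "1 \<le> s"
  shows "mu x y * (\<bar>u y - u x\<bar> powr (m - 1) * (min (u x) (u y)) powr (-t) * \<bar>\<phi> y powr s - \<phi> x powr s\<bar>)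
    \<le> cross_const s * (mu x y * (grad_u x powr (m - 1) * u x powr (-t) * \<phi> x powr (s - 1) * (\<phi> x - \<phi> y)))"
proof (cases "adj mu x y")
  case True
  have "\<bar>u y - u x\<bar> powr (m - 1) \<le> (sqrt (2 * p0) * grad_u x) powr (m - 1)"
    using abs_diff_le_grad_u[OF True] m_gt_1 by (intro powr_mono2) auto
  then have grad: "\<bar>u y - u x\<bar> powr (m - 1) \<le> sqrt (2 * p0) powr (m - 1) * grad_u x powr (m - 1)"
    using grad_u_nonneg[of x] p0_gt_1 by (simp add: powr_mult)
  have "u x / K \<le> min (u x) (u y)"
    using harnack_lower[OF True] K_ge_1 u_pos[of x] by (simp add: divide_le_eq mult_le_cancel_left1)
  then have "(min (u x) (u y)) powr (-t) \<le> (u x / K) powr (-t)"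
    using u_pos[of x] K_pos t by (intro powr_mono2') auto
  also have "\<dots> = u x powr (-t) * K powr t"
    using u_pos[of x] K_pos by (simp add: powr_divide powr_minus_divide)
  also have "\<dots> \<le> u x powr (-t) * K"
    using K_ge_1 t powr_mono[of t 1 K] by (intro mult_left_mono) auto
  finally have harn: "(min (u x) (u y)) powr (-t) \<le> K * u x powr (-t)"
    by (simp add: mult.commute)
  have "\<phi> y powr s \<le> \<phi> x powr s" using lt \<phi> s by (intro powr_mono2) auto
  then have cutoff: "\<bar>\<phi> y powr s - \<phi> x powr s\<bar> \<le> s * \<phi> x powr (s - 1) * (\<phi> x - \<phi> y)"
    using powr_diff_le_mult[of "\<phi> y" "\<phi> x" s] \<phi> lt s by simp
  have "\<bar>u y - u x\<bar> powr (m - 1) * (min (u x) (u y)) powr (-t) * \<bar>\<phi> y powr s - \<phi> x powr s\<bar>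
      \<le> (sqrt (2 * p0) powr (m - 1) * grad_u x powr (m - 1)) * (K * u x powr (-t))
        * (s * \<phi> x powr (s - 1) * (\<phi> x - \<phi> y))"
    using grad harn cutoff K_pos grad_u_nonneg[of x] by (intro mult_mono mult_nonneg_nonneg) auto
  also have "\<dots> = cross_const s * (grad_u x powr (m - 1) * u x powr (-t) * \<phi> x powr (s - 1) * (\<phi> x - \<phi> y))"
    by (simp add: cross_const_def algebra_simps)
  finally have "mu x y * (\<bar>u y - u x\<bar> powr (m - 1) * (min (u x) (u y)) powr (-t) * \<bar>\<phi> y powr s - \<phi> x powr s\<bar>)
      \<le> mu x y * (cross_const s * (grad_u x powr (m - 1) * u x powr (-t) * \<phi> x powr (s - 1) * (\<phi> x - \<phi> y)))"
    using mu_nonneg[of x y] by (rule mult_left_mono)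
  then show ?thesis by (simp only: mult.left_commute)
qed (simp add: adj_iff)

text \<open>Taking logarithms, the exponents of \<open>grad_u x\<close>, \<open>u x\<close> and \<open>d\<close> agree on both sides by the
  hypotheses on \<open>\<alpha>, \<beta>, \<gamma>, lam\<close>; the exponent of \<open>\<phi>x \<le> 1\<close> can only decrease since \<open>1 \<le> s \<gamma>\<close>.\<close>

lemma cross_term_split:
  fixes s \<alpha> \<beta> \<gamma> lam d :: real
  assumes \<phi>: "0 < \<phi>x" "\<phi>x \<le> 1" and d: "0 < d"
    and par: "0 < \<alpha>" "0 < \<beta>" "0 < \<gamma>" "\<alpha> + \<beta> + \<gamma> = 1"
      "p * \<alpha> - t * \<alpha> - (1 + t) * \<beta> = - t" "q * \<alpha> + m * \<beta> = m - 1" "1 \<le> s * \<gamma>" "lam * \<gamma> = 1"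
  shows "grad_u x powr (m - 1) * u x powr (-t) * \<phi>x powr (s - 1) * d
    \<le> (source x * u x powr (-t) * \<phi>x powr s) powr \<alpha> * (grad_u x powr m * u x powr (-1 - t) * \<phi>x powr s) powr \<beta>
       * (d powr lam) powr \<gamma>"
proof (cases "grad_u x = 0")
  case True
  then show ?thesis using m_gt_1 by simp
next
  case False
  then have g: "0 < grad_u x" using grad_u_nonneg[of x] by simp
  define Lg Lu Lp Ld where "Lg = ln (grad_u x)" and "Lu = ln (u x)" and "Lp = ln \<phi>x" and "Ld = ln d"
  have lhs: "grad_u x powr (m - 1) * u x powr (-t) * \<phi>x powr (s - 1) * d
      = exp ((m - 1) * Lg + (-t) * Lu + (s - 1) * Lp + Ld)"
    using g u_pos[of x] \<phi> d
    by (simp add: powr_def Lg_def Lu_def Lp_def Ld_def exp_add exp_diff exp_minus field_simps)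
  have rhs: "(source x * u x powr (-t) * \<phi>x powr s) powr \<alpha> * (grad_u x powr m * u x powr (-1 - t) * \<phi>x powr s) powr \<beta>
       * (d powr lam) powr \<gamma>
      = exp (\<alpha> * (p * Lu + q * Lg + (-t) * Lu + s * Lp) + \<beta> * (m * Lg + (-1 - t) * Lu + s * Lp) + (lam * \<gamma>) * Ld)"
    using g u_pos[of x] \<phi> d unfolding source_eq[OF g]
    by (simp add: powr_def Lg_def Lu_def Lp_def Ld_def ln_mult ln_exp mult_exp_exp algebra_simps)
  have sum: "\<alpha> + \<beta> = 1 - \<gamma>" using par by linarith
  have "s * (\<alpha> + \<beta>) - (s - 1) = 1 - s * \<gamma>" unfolding sum by (simp add: algebra_simps)
  then have "s * (\<alpha> + \<beta>) - (s - 1) \<le> 0" using par by simp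
  moreover have "Lp \<le> 0" using \<phi> by (simp add: Lp_def)
  ultimately have "0 \<le> Lp * (s * (\<alpha> + \<beta>) - (s - 1))"
    by (simp add: mult_nonpos_nonpos)
  moreover have "Lg * (q * \<alpha> + m * \<beta>) = Lg * (m - 1)" "Lu * (p * \<alpha> - t * \<alpha> - (1 + t) * \<beta>) = Lu * (- t)"
    using par by simp_all
  ultimately have "(m - 1) * Lg + (-t) * Lu + (s - 1) * Lp + Ld
      \<le> \<alpha> * (p * Lu + q * Lg + (-t) * Lu + s * Lp) + \<beta> * (m * Lg + (-1 - t) * Lu + s * Lp) + (lam * \<gamma>) * Ld"
    using par(8) by (simp add: algebra_simps)
  then show ?thesis unfolding lhs rhs by simp
qed

end

context positive_solution
begin

lemma caccioppoli_estimate: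
  assumes F: "finite F" and \<phi>: "\<And>x. 0 \<le> \<phi> x" "\<And>x. \<phi> x \<le> 1"
    and supp: "\<And>x. \<phi> x \<noteq> 0 \<Longrightarrow> x \<in> F \<and> nbrs mu x \<subseteq> F"
    and t: "0 < t" "t \<le> 1" and s: "1 \<le> s"
  shows "weighted_source t s \<phi> F + gradient_const t * gradient_mass t s \<phi> F \<le> cross_const s * cross_sum t s \<phi> F"
proof -
  define \<Phi> where "\<Phi> x = \<phi> x powr s" for x
  define BB where "BB = (\<Sum>x\<in>F. \<Sum>y\<in>F. mu x y * (\<bar>u y - u x\<bar> powr m * (max (u x) (u y)) powr (-t - 1)
    * max (\<Phi> x) (\<Phi> y)))"
  define G where "G x y = mu x y * (\<bar>u y - u x\<bar> powr (m - 1) * (min (u x) (u y)) powr (-t) * \<bar>\<Phi> y - \<Phi> x\<bar>)" for x y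
  have "\<Phi> x \<noteq> 0 \<Longrightarrow> x \<in> F \<and> nbrs mu x \<subseteq> F" for x
    using supp by (auto simp: \<Phi>_def)
  then have tested: "weighted_source t s \<phi> F + (t/2) * BB \<le> (1/2) * (\<Sum>x\<in>F. \<Sum>y\<in>F. G x y)"
    using test_function_inequality[OF F _ _ t(1), of \<Phi>]
    by (simp add: weighted_source_def BB_def G_def \<Phi>_def)
  have "gradient_mass t s \<phi> F \<le> (\<Sum>x\<in>F. K\<^sup>2 * p0 * (\<Sum>y\<in>F. mu x y * (\<bar>u y - u x\<bar> powr m
      * (max (u x) (u y)) powr (-t - 1) * max (\<phi> x powr s) (\<phi> y powr s))))"
    unfolding gradient_mass_def using supp \<phi> t s by (intro sum_mono gradient_term_le[OF F]) auto
  then have "gradient_mass t s \<phi> F \<le> K\<^sup>2 * p0 * BB"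
    by (simp add: BB_def \<Phi>_def sum_distrib_left)
  then have "gradient_const t * gradient_mass t s \<phi> F \<le> gradient_const t * (K\<^sup>2 * p0 * BB)"
    using gradient_const_pos[OF t(1)] by (intro mult_left_mono) auto
  also have "\<dots> = (t/2) * BB"
    using K_pos p0_gt_1 by (simp add: gradient_const_def field_simps)
  finally have "weighted_source t s \<phi> F + gradient_const t * gradient_mass t s \<phi> F
      \<le> (1/2) * (\<Sum>x\<in>F. \<Sum>y\<in>F. G x y)"
    using tested by linarith
  also have "\<dots> = (\<Sum>x\<in>F. \<Sum>y\<in>F. if \<phi> y < \<phi> x then G x y else 0)"
    by (subst sum_symmetric_eq_2_sum_less[where \<phi> = \<phi>])
       (auto simp: G_def \<Phi>_def mu_sym abs_minus_commute min.commute)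
  also have "\<dots> \<le> cross_const s * cross_sum t s \<phi> F"
    unfolding cross_sum_def sum_distrib_left
    using cross_term_le[OF \<phi> _ t s] by (intro sum_mono) (auto simp: G_def \<Phi>_def)
  finally show ?thesis .
qed

lemma cross_sum_le:
  assumes F: "finite F" and X: "X \<subseteq> F" and \<phi>: "\<And>x. 0 \<le> \<phi> x" "\<And>x. \<phi> x \<le> 1"
    and Xcov: "\<And>x y. adj mu x y \<Longrightarrow> \<phi> y < \<phi> x \<Longrightarrow> x \<in> X"
    and par: "0 < \<alpha>" "0 < \<beta>" "0 < \<gamma>" "\<alpha> + \<beta> + \<gamma> = 1"
      "p * \<alpha> - t * \<alpha> - (1 + t) * \<beta> = - t" "q * \<alpha> + m * \<beta> = m - 1" "1 \<le> s * \<gamma>" "lam * \<gamma> = 1"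
  shows "cross_sum t s \<phi> F
    \<le> weighted_source t s \<phi> X powr \<alpha> * gradient_mass t s \<phi> F powr \<beta> * cutoff_energy \<phi> lam F powr \<gamma>"
proof -
  define w where "w xy = (if \<phi> (snd xy) < \<phi> (fst xy) then mu (fst xy) (snd xy) else 0)" for xy :: "'v \<times> 'v"
  define a where "a x = source x * u x powr (-t) * \<phi> x powr s" for x
  define b where "b x = grad_u x powr m * u x powr (-1 - t) * \<phi> x powr s" for x
  define c where "c xy = (if \<phi> (snd xy) < \<phi> (fst xy) then (\<phi> (fst xy) - \<phi> (snd xy)) powr lam else 0)"
    for xy :: "'v \<times> 'v"
  have w: "0 \<le> w xy" for xy by (simp add: w_def mu_nonneg)
  have weighted_row_sum: "(\<Sum>xy\<in>F \<times> F. w xy * h (fst xy)) \<le> (\<Sum>x\<in>X. vmeasure mu x * h x)"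
    if "\<And>x. 0 \<le> h x" for h
    unfolding w_def using sum_descending_edges_le[OF F X Xcov that] .
  have "(if \<phi> y < \<phi> x then mu x y * (grad_u x powr (m - 1) * u x powr (-t) * \<phi> x powr (s - 1) * (\<phi> x - \<phi> y))
      else 0) \<le> w (x, y) * (a x powr \<alpha> * b x powr \<beta> * c (x, y) powr \<gamma>)" for x y
  proof (cases "\<phi> y < \<phi> x")
    case True
    then have "0 < \<phi> x" using \<phi>(1)[of y] by simp
    then show ?thesis
      using True cross_term_split[OF _ \<phi>(2)[of x] _ par, of "\<phi> x - \<phi> y" x] mu_nonneg[of x y]
      by (simp add: w_def a_def b_def c_def mult_left_mono)
  qed (simp add: w_def)
  then have "cross_sum t s \<phi> F \<le> (\<Sum>x\<in>F. \<Sum>y\<in>F. w (x, y) * (a x powr \<alpha> * b x powr \<beta> * c (x, y) powr \<gamma>))"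
    unfolding cross_sum_def by (intro sum_mono)
  also have "\<dots> = (\<Sum>xy\<in>F \<times> F. w xy * (a (fst xy) powr \<alpha> * b (fst xy) powr \<beta> * c xy powr \<gamma>))"
    by (simp add: sum.cartesian_product split_def)
  also have "\<dots> \<le> (\<Sum>xy\<in>F \<times> F. w xy * a (fst xy)) powr \<alpha> * (\<Sum>xy\<in>F \<times> F. w xy * b (fst xy)) powr \<beta>
      * (\<Sum>xy\<in>F \<times> F. w xy * c xy) powr \<gamma>"
    using F par w by (intro sum_holder3) (auto simp: a_def b_def c_def source_nonneg)
  also have "\<dots> \<le> weighted_source t s \<phi> X powr \<alpha> * gradient_mass t s \<phi> F powr \<beta> * cutoff_energy \<phi> lam F powr \<gamma>"
  proof (intro mult_mono powr_mono2)
    show "(\<Sum>xy\<in>F \<times> F. w xy * a (fst xy)) \<le> weighted_source t s \<phi> X"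
      using weighted_row_sum[of a] by (simp add: a_def weighted_source_def source_nonneg mult.assoc)
    have "(\<Sum>xy\<in>F \<times> F. w xy * b (fst xy)) \<le> (\<Sum>x\<in>X. vmeasure mu x * b x)"
      using weighted_row_sum[of b] by (simp add: b_def)
    also have "\<dots> \<le> (\<Sum>x\<in>F. vmeasure mu x * b x)"
      using X F vmeasure_pos by (intro sum_mono2) (auto simp: b_def less_imp_le)
    finally show "(\<Sum>xy\<in>F \<times> F. w xy * b (fst xy)) \<le> gradient_mass t s \<phi> F"
      by (simp add: b_def gradient_mass_def mult.assoc)
    show "(\<Sum>xy\<in>F \<times> F. w xy * c xy) \<le> cutoff_energy \<phi> lam F"
      by (simp add: cutoff_energy_def sum.cartesian_product split_def w_def c_def if_distrib cong: if_cong)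
  qed (use par w in \<open>auto intro!: sum_nonneg mult_nonneg_nonneg simp: a_def b_def c_def source_nonneg\<close>)
  finally show ?thesis .
qed

lemma key_estimate:
  assumes F: "finite F" and X: "X \<subseteq> F" and \<phi>: "\<And>x. 0 \<le> \<phi> x" "\<And>x. \<phi> x \<le> 1"
    and supp: "\<And>x. \<phi> x \<noteq> 0 \<Longrightarrow> x \<in> F \<and> nbrs mu x \<subseteq> F"
    and Xcov: "\<And>x y. adj mu x y \<Longrightarrow> \<phi> y < \<phi> x \<Longrightarrow> x \<in> X"
    and t: "0 < t" "t \<le> 1" and s: "1 \<le> s"
    and par: "0 < \<alpha>" "0 < \<beta>" "0 < \<gamma>" "\<alpha> + \<beta> + \<gamma> = 1"
      "p * \<alpha> - t * \<alpha> - (1 + t) * \<beta> = - t" "q * \<alpha> + m * \<beta> = m - 1" "1 \<le> s * \<gamma>" "lam * \<gamma> = 1"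
  shows "weighted_source t s \<phi> F
    \<le> (cross_const s * weighted_source t s \<phi> X powr \<alpha> * cutoff_energy \<phi> lam F powr \<gamma>
        * gradient_const t powr (-\<beta>)) powr (1 / (1 - \<beta>))"
proof -
  have "weighted_source t s \<phi> F + gradient_const t * gradient_mass t s \<phi> F
      \<le> cross_const s * cross_sum t s \<phi> F"
    by (rule caccioppoli_estimate[where \<phi> = \<phi>, OF F \<phi> supp t s])
  also have "\<dots> \<le> cross_const s * (weighted_source t s \<phi> X powr \<alpha> * gradient_mass t s \<phi> F powr \<beta>
      * cutoff_energy \<phi> lam F powr \<gamma>)"
    using cross_sum_le[where \<phi> = \<phi>, OF F X \<phi> Xcov par] cross_const_nonneg s by (intro mult_left_mono) auto
  also have "\<dots> = (cross_const s * weighted_source t s \<phi> X powr \<alpha> * cutoff_energy \<phi> lam F powr \<gamma>)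
      * gradient_mass t s \<phi> F powr \<beta>"
    by (simp add: mult_ac)
  finally show ?thesis
    using par s cross_const_nonneg[of s]
    by (intro absorb_powr_le[OF weighted_source_nonneg gradient_mass_nonneg gradient_const_pos[OF t(1)]])
       auto
qed

end

section \<open>Volume growth and the energy of radial cut-offs\<close>

context rooted_graph
begin

definition out_weight :: "'v \<Rightarrow> real" where
  "out_weight x = (\<Sum>y\<in>nbrs mu x. if r x < r y then mu x y else 0)"

definition level_weight :: "nat \<Rightarrow> real" where
  "level_weight k = (\<Sum>x\<in>{x. x \<in> B k \<and> r x = k}. out_weight x)"

lemma out_weight_nonneg: "0 \<le> out_weight x"
  unfolding out_weight_def by (intro sum_nonneg) (simp add: mu_nonneg)

lemma level_weight_nonneg: "0 \<le> level_weight k"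
  unfolding level_weight_def by (intro sum_nonneg) (simp add: out_weight_nonneg)

lemma sum_B_by_level: "(\<Sum>x\<in>B j. out_weight x * h (r x)) = (\<Sum>k\<le>j. level_weight k * h k)"
proof -
  have "(\<Sum>x\<in>B j. out_weight x * h (r x)) = (\<Sum>k\<le>j. \<Sum>x\<in>{x. x \<in> B j \<and> r x = k}. out_weight x * h (r x))"
    using finite_B by (intro sum.group[symmetric]) (auto simp: mem_B_iff)
  also have "\<dots> = (\<Sum>k\<le>j. level_weight k * h k)"
  proof (intro sum.cong refl)
    fix k assume "k \<in> {..j}"
    then have "{x. x \<in> B j \<and> r x = k} = {x. x \<in> B k \<and> r x = k}" by (auto simp: mem_B_iff)
    then show "(\<Sum>x\<in>{x. x \<in> B j \<and> r x = k}. out_weight x * h (r x)) = level_weight k * h k"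
      by (simp add: level_weight_def sum_distrib_right)
  qed
  finally show ?thesis .
qed

lemma W_eq_sum_level_weight: "W mu x0 n = (\<Sum>k\<le>n. level_weight k)"
proof -
  have "{(x, y). x \<in> gball mu x0 n \<and> adj mu x y \<and> gdist mu x0 x < gdist mu x0 y}
      = (SIGMA x:B n. {y \<in> nbrs mu x. r x < r y})"
    by (auto simp: B_def r_def nbrs_iff)
  then have "W mu x0 n = (\<Sum>(x, y)\<in>(SIGMA x:B n. {y \<in> nbrs mu x. r x < r y}). mu x y)"
    unfolding W_def by simp
  also have "\<dots> = (\<Sum>x\<in>B n. \<Sum>y\<in>{y \<in> nbrs mu x. r x < r y}. mu x y)"
    using finite_B finite_nbrs by (subst sum.Sigma) auto
  also have "\<dots> = (\<Sum>x\<in>B n. out_weight x * 1)"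
    unfolding out_weight_def using finite_nbrs by (intro sum.cong[OF refl]) (simp add: sum.inter_filter)
  also have "\<dots> = (\<Sum>k\<le>n. level_weight k * 1)"
    by (rule sum_B_by_level)
  finally show ?thesis by simp
qed

lemma radial_energy_le:
  fixes \<psi> :: "nat \<Rightarrow> real"
  assumes mono: "\<And>k. \<psi> (Suc k) \<le> \<psi> k"
  shows "(\<Sum>x\<in>B N. \<Sum>y\<in>B N. if \<psi> (r y) < \<psi> (r x) then mu x y * (\<psi> (r x) - \<psi> (r y)) powr lam else 0)
    \<le> (\<Sum>k\<in>{..N}. level_weight k * (\<psi> k - \<psi> (Suc k)) powr lam)"
proof -
  have monok: "\<psi> j \<le> \<psi> i" if "i \<le> j" for i j
    using that by (induction j) (auto intro: order_trans[OF mono] simp: le_Suc_eq)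
  have "(\<Sum>x\<in>B N. \<Sum>y\<in>B N. if \<psi> (r y) < \<psi> (r x) then mu x y * (\<psi> (r x) - \<psi> (r y)) powr lam else 0)
      \<le> (\<Sum>x\<in>B N. out_weight x * (\<psi> (r x) - \<psi> (Suc (r x))) powr lam)"
  proof (intro sum_mono)
    fix x
    define dd where "dd = (\<psi> (r x) - \<psi> (Suc (r x))) powr lam"
    have dd: "0 \<le> dd" by (simp add: dd_def)
    have "(\<Sum>y\<in>B N. if \<psi> (r y) < \<psi> (r x) then mu x y * (\<psi> (r x) - \<psi> (r y)) powr lam else 0)
        \<le> (\<Sum>y\<in>B N. (if r x < r y then mu x y else 0) * dd)"
    proof (intro sum_mono)
      fix y
      show "(if \<psi> (r y) < \<psi> (r x) then mu x y * (\<psi> (r x) - \<psi> (r y)) powr lam else 0)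
          \<le> (if r x < r y then mu x y else 0) * dd"
      proof (cases "adj mu x y \<and> \<psi> (r y) < \<psi> (r x)")
        case True
        then have "r x < r y" using monok[of "r y" "r x"] by (cases "r y \<le> r x") auto
        then have "r y = Suc (r x)" using r_adj_le[of x y] True by simp
        then show ?thesis using True \<open>r x < r y\<close> by (simp add: dd_def)
      next
        case False
        then show ?thesis using dd mu_nonneg[of x y] by (auto simp: adj_iff)
      qed
    qed
    also have "\<dots> = (\<Sum>y\<in>B N. if r x < r y then mu x y else 0) * dd" by (simp add: sum_distrib_right)
    also have "\<dots> \<le> out_weight x * dd"
    proof (intro mult_right_mono dd)
      have "(\<Sum>y\<in>B N. if r x < r y then mu x y else 0)
          = (\<Sum>y\<in>B N \<inter> nbrs mu x. if r x < r y then mu x y else 0)"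
        using finite_B by (intro sum.mono_neutral_right) (auto simp: nbrs_iff adj_iff)
      also have "\<dots> \<le> out_weight x"
        unfolding out_weight_def using finite_nbrs by (intro sum_mono2) (auto simp: mu_nonneg)
      finally show "(\<Sum>y\<in>B N. if r x < r y then mu x y else 0) \<le> out_weight x" .
    qed
    finally show "(\<Sum>y\<in>B N. if \<psi> (r y) < \<psi> (r x) then mu x y * (\<psi> (r x) - \<psi> (r y)) powr lam else 0)
        \<le> out_weight x * (\<psi> (r x) - \<psi> (Suc (r x))) powr lam" by (simp add: dd_def)
  qed
  also have "\<dots> = (\<Sum>k\<in>{..N}. level_weight k * (\<psi> k - \<psi> (Suc k)) powr lam)"
    by (rule sum_B_by_level)
  finally show ?thesis .
qed

end

context rooted_graph
begin

lemma powr_neg_mult_W_le: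
  fixes Cw \<gamma> \<delta> lam :: real
  assumes j: "3 \<le> j" "j \<le> n\<^sup>2" and Cw: "0 < Cw"
    and W_le: "W mu x0 j \<le> Cw * real j powr \<gamma> * ln (real j) powr \<delta>"
    and lam: "lam \<le> \<gamma>" and \<delta>: "0 \<le> \<delta>"
  shows "real j powr (-lam) * W mu x0 j \<le> Cw * real n powr (2 * (\<gamma> - lam)) * (2 * ln (real n)) powr \<delta>"
proof -
  have jpos: "3 \<le> real j" using j by simp
  have "0 < n" using j by (cases "n = 0") auto
  have jN: "real j \<le> real (n\<^sup>2)" using j by linarith
  then have lnj: "ln (real j) \<le> ln (real (n\<^sup>2))" using jpos \<open>0 < n\<close> by (subst ln_le_cancel_iff) auto
  have "real j powr (-lam) * W mu x0 j \<le> real j powr (-lam) * (Cw * real j powr \<gamma> * ln (real j) powr \<delta>)"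
    using W_le by (intro mult_left_mono) auto
  also have "\<dots> = Cw * real j powr (\<gamma> - lam) * ln (real j) powr \<delta>"
    using jpos by (simp add: powr_diff powr_minus_divide field_simps)
  also have "\<dots> \<le> Cw * real (n\<^sup>2) powr (\<gamma> - lam) * ln (real (n\<^sup>2)) powr \<delta>"
    using jpos jN lnj lam \<delta> Cw by (intro mult_mono powr_mono2) auto
  also have "real n powr (2 * (\<gamma> - lam)) = (real n powr 2) powr (\<gamma> - lam)"
    by (rule powr_powr[symmetric])
  then have "Cw * real (n\<^sup>2) powr (\<gamma> - lam) * ln (real (n\<^sup>2)) powr \<delta>
      = Cw * real n powr (2 * (\<gamma> - lam)) * (2 * ln (real n)) powr \<delta>"
    using jpos jN by (simp add: powr_numeral ln_realpow)
  finally show ?thesis .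
qed

lemma log_cutoff_energy_le:
  fixes n n1 :: nat and Cw \<gamma> \<delta> lam :: real
  assumes n: "3 \<le> n" "n1 \<le> n" and Cw: "0 < Cw"
    and W_le: "\<And>j. n1 \<le> j \<Longrightarrow> W mu x0 j \<le> Cw * real j powr \<gamma> * ln (real j) powr \<delta>"
    and lam: "0 < lam" "lam \<le> \<gamma>" and \<delta>: "0 \<le> \<delta>"
  shows "(\<Sum>k\<le>n\<^sup>2. level_weight k * (log_cutoff n k - log_cutoff n (Suc k)) powr lam)
    \<le> ln (real n) powr (-lam) * (Cw * real n powr (2 * (\<gamma> - lam)) * (2 * ln (real n)) powr \<delta>)
      * (1 + 2 * lam * ln (real n))"
proof -
  define L where "L = ln (real n)"
  define N where "N = n\<^sup>2 - 1"
  define Q where "Q = Cw * real n powr (2 * (\<gamma> - lam)) * (2 * L) powr \<delta>"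
  have "n * 3 \<le> n * n" using n by (intro mult_le_mono2) auto
  then have nN: "n \<le> N" and N: "Suc N = n\<^sup>2"
    using n unfolding N_def power2_eq_square by arith+
  have partial: "real j powr (-lam) * (\<Sum>k\<le>j. level_weight k) \<le> Q" if j: "n \<le> j" "j \<le> N" for j
    unfolding Q_def L_def W_eq_sum_level_weight[symmetric]
    using j n N W_le[of j] lam \<delta> Cw by (intro powr_neg_mult_W_le) auto
  have "(\<Sum>k\<le>n\<^sup>2. level_weight k * (log_cutoff n k - log_cutoff n (Suc k)) powr lam)
      \<le> L powr (-lam) * (\<Sum>k\<in>{n..N}. level_weight k * real k powr (-lam))"
    unfolding L_def N_def by (rule sum_log_cutoff_diff_powr_le[OF n(1) level_weight_nonneg lam(1)])
  also have "\<dots> \<le> L powr (-lam) * (Q * (1 + lam * ln (real N)))"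
    using sum_mult_powr_neg_le[OF level_weight_nonneg _ nN lam(1) partial] n by (intro mult_left_mono) auto
  also have "\<dots> \<le> L powr (-lam) * (Q * (1 + 2 * lam * L))"
  proof -
    have "ln (real N) \<le> ln (real (n\<^sup>2))" using nN N n by simp
    then have "lam * ln (real N) \<le> 2 * lam * L" using lam n by (simp add: L_def ln_realpow)
    moreover have "0 \<le> Q" using Cw by (simp add: Q_def)
    ultimately show ?thesis by (intro mult_left_mono) auto
  qed
  finally show ?thesis by (simp add: Q_def L_def mult.assoc)
qed

end

section \<open>Critical volume growth\<close>

locale critical_growth = positive_solution mu x0 m p q p0 u
  for mu :: "'v \<Rightarrow> 'v \<Rightarrow> real" and x0 m p q p0 u +
  fixes Cw :: real and n1 :: nat
  assumes p_nonneg: "0 \<le> p" and q_gt: "m - 1 - p < q" and q_lt: "q < m" and Cw_pos: "0 < Cw"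
    and W_le: "\<And>n. n1 \<le> n \<Longrightarrow> W mu x0 n \<le> Cw * real n powr ((m * p + q) / (p + q - m + 1))
        * ln (real n) powr ((m - 1) / (p + q - m + 1))"
begin

definition rho :: real where "rho = p + q - m + 1"
definition D0 :: real where "D0 = m * p + q"
definition vol_exp :: real where "vol_exp = D0 / rho"
definition log_exp :: real where "log_exp = (m - 1) / rho"

text \<open>For \<open>0 < t \<le> t0\<close>, the numbers \<open>al t, be t, ga t\<close> and \<open>la t = 1 / ga t\<close> solve the linear
  system imposed on the Hoelder exponents of \<open>key_estimate\<close> (with \<open>s = vol_exp\<close>); \<open>ka t\<close> is the
  power of \<open>ln n\<close> gained when \<open>t = 1 / ln n\<close>.\<close>

definition Dt :: "real \<Rightarrow> real" where "Dt t = D0 - t * (m - q)"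
definition al :: "real \<Rightarrow> real" where "al t = (m - 1 - t) / Dt t"
definition be :: "real \<Rightarrow> real" where "be t = (m - 1 - al t * q) / m"
definition ga :: "real \<Rightarrow> real" where "ga t = rho / Dt t"
definition la :: "real \<Rightarrow> real" where "la t = Dt t / rho"
definition ka :: "real \<Rightarrow> real" where "ka t = be t * la t"
definition t0 :: real where "t0 = min (1/2) (min ((m - 1) / 2) (D0 / (2 * (m - q))))"

lemma rho_pos: "0 < rho"
  using q_gt by (simp add: rho_def)

lemma mq_pos: "0 < m - q"
  using q_lt by simp

lemma D0_pos: "0 < D0"
proof -
  have "m * p + q > m * p + (m - 1 - p)" using q_gt by simp
  moreover have "m * p + (m - 1 - p) = (m - 1) * (p + 1)" by (simp add: algebra_simps)
  moreover have "0 < (m - 1) * (p + 1)" using m_gt_1 p_nonneg by simp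
  ultimately show ?thesis by (simp add: D0_def)
qed

lemma t0_pos: "0 < t0"
  using m_gt_1 D0_pos mq_pos by (simp add: t0_def)

lemma t0_le: "t0 \<le> 1/2" "t0 \<le> (m - 1) / 2" "t0 \<le> D0 / (2 * (m - q))"
  unfolding t0_def by linarith+

lemma vol_exp_gt_m: "m < vol_exp"
proof -
  have "D0 - m * rho = (m - 1) * (m - q)" by (simp add: D0_def rho_def algebra_simps)
  then have "0 < D0 - m * rho" using m_gt_1 mq_pos by simp
  then show ?thesis using rho_pos by (simp add: vol_exp_def field_simps)
qed

lemma vol_exp_ge_1: "1 \<le> vol_exp"
  using vol_exp_gt_m m_gt_1 by simp

lemma log_exp_nonneg: "0 \<le> log_exp"
  using m_gt_1 rho_pos by (simp add: log_exp_def)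

context
  fixes t :: real assumes t: "0 < t" "t \<le> t0"
begin

lemma Dt_ge: "D0 / 2 \<le> Dt t"
proof -
  have "t \<le> D0 / (2 * (m - q))" using t t0_le(3) by simp
  then have "t * (2 * (m - q)) \<le> D0" using mq_pos by (simp add: pos_le_divide_eq)
  then have "t * (m - q) \<le> D0 / 2" by (simp add: algebra_simps)
  then show ?thesis by (simp add: Dt_def)
qed

lemma Dt_pos: "0 < Dt t"
  using Dt_ge D0_pos by simp

lemma Dt_le: "Dt t \<le> D0"
  using t mq_pos by (simp add: Dt_def)

lemma t_bounds: "t \<le> 1/2" "t \<le> (m - 1) / 2"
  using t t0_le by auto

lemma al_pos: "0 < al t"
  using Dt_pos t_bounds m_gt_1 by (simp add: al_def)

lemma ga_pos: "0 < ga t"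
  using Dt_pos rho_pos by (simp add: ga_def)

lemma la_pos: "0 < la t"
  using Dt_pos rho_pos by (simp add: la_def)

lemma la_ga: "la t * ga t = 1"
  using Dt_pos rho_pos by (simp add: la_def ga_def)

lemma al_Dt: "al t * Dt t = m - 1 - t"
  using Dt_pos by (simp add: al_def)

lemma be_m: "be t * m = m - 1 - al t * q"
  using m_gt_1 by (simp add: be_def)

lemma be_formula: "be t * m * Dt t = m * ((m - 1) * p - t * (m - 1 - q))"
proof -
  have "be t * m * Dt t = (m - 1) * Dt t - q * (al t * Dt t)" unfolding be_m by (simp add: algebra_simps)
  also have "\<dots> = (m - 1) * Dt t - q * (m - 1 - t)" by (simp add: al_Dt)
  also have "\<dots> = m * ((m - 1) * p - t * (m - 1 - q))" by (simp add: Dt_def D0_def algebra_simps)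
  finally show ?thesis .
qed

lemma be_pos: "0 < be t"
proof -
  have key: "0 < (m - 1) * p - t * (m - 1 - q)"
  proof (cases "m - 1 - q \<le> 0")
    case True
    show ?thesis
    proof (cases "m - 1 - q = 0")
      case True
      then have "0 < p" using q_gt by simp
      then show ?thesis using True m_gt_1 by simp
    next
      case False
      then have "t * (m - 1 - q) < 0" using True t by (simp add: mult_pos_neg)
      moreover have "0 \<le> (m - 1) * p" using m_gt_1 p_nonneg by simp
      ultimately show ?thesis by linarith
    qed
  next
    case False
    have "(m - 1) * (m - 1 - q) < (m - 1) * p" using q_gt m_gt_1 by simp
    moreover have "t * (m - 1 - q) \<le> (m - 1) * (m - 1 - q)" using False t_bounds m_gt_1 by (intro mult_right_mono) auto
    ultimately show ?thesis by linarith
  qed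
  have "0 < m * ((m - 1) * p - t * (m - 1 - q))" using key m_gt_1 by simp
  then have pos: "0 < be t * (m * Dt t)" using be_formula by (simp only: mult.assoc)
  show ?thesis
  proof (rule ccontr)
    assume "\<not> 0 < be t"
    then have "be t * (m * Dt t) \<le> 0" using m_gt_1 Dt_pos by (intro mult_nonpos_nonneg) auto
    then show False using pos by simp
  qed
qed

lemma exponents_sum: "al t + be t + ga t = 1"
proof -
  have "(al t + be t + ga t) * (m * Dt t) = m * (al t * Dt t) + be t * m * Dt t + m * rho"
    using Dt_pos by (simp add: ga_def algebra_simps)
  also have "\<dots> = 1 * (m * Dt t)"
    unfolding al_Dt be_formula by (simp add: Dt_def D0_def rho_def algebra_simps)
  finally show ?thesis using m_gt_1 Dt_pos mult_right_cancel[of "m * Dt t" "al t + be t + ga t" 1] by simp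
qed

lemma exponent_u: "p * al t - t * al t - (1 + t) * be t = - t"
proof -
  have "(p * al t - t * al t - (1 + t) * be t) * (m * Dt t) = m * (p - t) * (al t * Dt t) - (1 + t) * (be t * m * Dt t)"
    by (simp add: algebra_simps)
  also have "\<dots> = (- t) * (m * Dt t)"
    unfolding al_Dt be_formula by (simp add: Dt_def D0_def algebra_simps)
  finally show ?thesis
    using m_gt_1 Dt_pos mult_right_cancel[of "m * Dt t" "p * al t - t * al t - (1 + t) * be t" "- t"] by simp
qed

lemma exponent_grad: "q * al t + m * be t = m - 1"
  using be_m by (simp add: algebra_simps)

lemma vol_exp_ga: "1 \<le> vol_exp * ga t"
proof -
  have "vol_exp * ga t = D0 / Dt t" using rho_pos by (simp add: vol_exp_def ga_def)
  then show ?thesis using Dt_le Dt_pos by simp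
qed

lemma la_le: "la t \<le> vol_exp"
  using Dt_le rho_pos by (simp add: la_def vol_exp_def divide_right_mono)

lemma vol_exp_minus_la: "vol_exp - la t = t * (m - q) / rho"
  by (simp add: vol_exp_def la_def Dt_def diff_divide_distrib)

lemma ka_formula: "ka t = ((m - 1) * p - t * (m - 1 - q)) / rho"
proof -
  have "m * (be t * Dt t) = m * ((m - 1) * p - t * (m - 1 - q))" using be_formula by (simp add: algebra_simps)
  then have "be t * Dt t = (m - 1) * p - t * (m - 1 - q)" using m_gt_1 by simp
  then show ?thesis by (simp add: ka_def la_def)
qed

lemma ka_exp: "ka t - la t + log_exp + 1 = t / rho"
proof -
  have "ka t - la t + log_exp + 1 = ((m - 1) * p - t * (m - 1 - q) - Dt t + (m - 1) + rho) / rho"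
    unfolding ka_formula la_def log_exp_def using rho_pos by (simp add: field_simps)
  also have "(m - 1) * p - t * (m - 1 - q) - Dt t + (m - 1) + rho = t"
    by (simp add: Dt_def D0_def rho_def algebra_simps)
  finally show ?thesis .
qed

lemma ga_ka: "ga t * ka t = be t"
proof -
  have "ga t * ka t = be t * (la t * ga t)" by (simp add: ka_def algebra_simps)
  then show ?thesis using la_ga by simp
qed

lemma be_lt_1: "be t < 1"
  using exponents_sum al_pos ga_pos by linarith

lemma inverse_one_minus_be_le: "1 / (1 - be t) \<le> vol_exp"
proof -
  have "ga t \<le> 1 - be t" using exponents_sum al_pos by linarith
  moreover have "1 / vol_exp \<le> ga t" using vol_exp_ga vol_exp_ge_1 by (simp add: divide_le_eq mult.commute)
  ultimately have "1 / vol_exp \<le> 1 - be t" by linarith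
  then show ?thesis using be_lt_1 vol_exp_ge_1 by (simp add: divide_le_eq mult.commute le_divide_eq)
qed

lemma al_ge: "(m - 1) / (2 * D0) \<le> al t"
proof -
  have "(m - 1) / 2 \<le> m - 1 - t" using t_bounds by simp
  then have "(m - 1) / 2 / D0 \<le> (m - 1 - t) / Dt t"
    using Dt_le Dt_pos D0_pos m_gt_1 by (intro frac_le) auto
  then show ?thesis by (simp add: al_def)
qed

lemma holder_exponents:
  "0 < al t" "0 < be t" "0 < ga t" "al t + be t + ga t = 1"
  "p * al t - t * al t - (1 + t) * be t = - t" "q * al t + m * be t = m - 1"
  "1 \<le> vol_exp * ga t" "la t * ga t = 1"
  using al_pos be_pos ga_pos exponents_sum exponent_u exponent_grad vol_exp_ga la_ga by simp_all

end

lemma W_le_exp: "n1 \<le> n \<Longrightarrow> W mu x0 n \<le> Cw * real n powr vol_exp * ln (real n) powr log_exp"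
  using W_le by (simp add: vol_exp_def log_exp_def D0_def rho_def)

end

context rooted_graph
begin

definition cutoff :: "nat \<Rightarrow> 'v \<Rightarrow> real" where
  "cutoff n x = log_cutoff n (r x)"

definition annulus :: "nat \<Rightarrow> 'v set" where
  "annulus n = {x \<in> B (n\<^sup>2). n \<le> r x}"

lemma cutoff_bounds: "0 \<le> cutoff n x" "cutoff n x \<le> 1"
  by (simp_all add: cutoff_def log_cutoff_bounds)

lemma cutoff_eq_1: "2 \<le> n \<Longrightarrow> r x \<le> n \<Longrightarrow> cutoff n x = 1"
  by (simp add: cutoff_def log_cutoff_eq_1)

lemma annulus_subset_B: "annulus n \<subseteq> B (n\<^sup>2)"
  by (auto simp: annulus_def)

lemma cutoff_support:
  assumes "2 \<le> n" "cutoff n x \<noteq> 0"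
  shows "x \<in> B (n\<^sup>2) \<and> nbrs mu x \<subseteq> B (n\<^sup>2)"
proof -
  have "r x < n\<^sup>2" using log_cutoff_eq_0[OF assms(1)] assms(2) by (auto simp: cutoff_def not_less[symmetric])
  then have "nbrs mu x \<subseteq> B (Suc (n\<^sup>2 - 1))" by (intro nbrs_subset_B_Suc) simp
  moreover have "Suc (n\<^sup>2 - 1) = n\<^sup>2" using assms by simp
  ultimately show ?thesis using \<open>r x < n\<^sup>2\<close> by (simp add: mem_B_iff)
qed

lemma cutoff_decrease_in_annulus:
  assumes "2 \<le> n" "adj mu x y" "cutoff n y < cutoff n x"
  shows "x \<in> annulus n"
proof -
  have "cutoff n y < 1" using assms cutoff_bounds[of n x] by simp
  then have "n < r y" using cutoff_eq_1[OF assms(1), of y] by (cases "r y \<le> n") auto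
  then have "n \<le> r x" using r_adj_le[OF assms(2)] by simp
  moreover have "cutoff n x \<noteq> 0" using assms cutoff_bounds[of n y] by simp
  ultimately show ?thesis using cutoff_support[OF assms(1)] by (simp add: annulus_def)
qed

lemma cutoff_energy_le_levels:
  assumes "2 \<le> n"
  shows "cutoff_energy (cutoff n) lam (B N)
    \<le> (\<Sum>k\<le>N. level_weight k * (log_cutoff n k - log_cutoff n (Suc k)) powr lam)"
  unfolding cutoff_energy_def cutoff_def
  using radial_energy_le[where \<psi> = "log_cutoff n" and N = N and lam = lam] log_cutoff_Suc_le[OF assms]
  by simp

lemma cutoff_energy_le_W:
  assumes n: "2 \<le> n" and lam: "0 < lam"
  shows "cutoff_energy (cutoff n) lam (B (n\<^sup>2)) \<le> W mu x0 (n\<^sup>2)"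
proof -
  have "cutoff_energy (cutoff n) lam (B (n\<^sup>2))
      \<le> (\<Sum>k\<le>n\<^sup>2. level_weight k * (log_cutoff n k - log_cutoff n (Suc k)) powr lam)"
    by (rule cutoff_energy_le_levels[OF n])
  also have "\<dots> \<le> (\<Sum>k\<le>n\<^sup>2. level_weight k * 1)"
  proof (intro sum_mono mult_left_mono level_weight_nonneg)
    fix k
    show "(log_cutoff n k - log_cutoff n (Suc k)) powr lam \<le> 1"
      using log_cutoff_Suc_le[OF n, of k] log_cutoff_bounds[of n k] log_cutoff_bounds[of n "Suc k"] lam
      by (intro powr_le1) auto
  qed
  also have "\<dots> = W mu x0 (n\<^sup>2)" by (simp add: W_eq_sum_level_weight)
  finally show ?thesis .
qed

end

context critical_growth
begin

definition energy_factor :: "real \<Rightarrow> nat \<Rightarrow> real" where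
  "energy_factor t n = max 1 (cross_const vol_exp * cutoff_energy (cutoff n) (la t) (B (n\<^sup>2)) powr ga t
     * gradient_const t powr (- be t))"

lemma energy_factor_ge_1: "1 \<le> energy_factor t n"
  by (simp add: energy_factor_def)

lemma key_estimate_cutoff:
  assumes n: "2 \<le> n" and t: "0 < t" "t \<le> t0" and X: "X \<subseteq> B (n\<^sup>2)"
    and Xcov: "\<And>x y. adj mu x y \<Longrightarrow> cutoff n y < cutoff n x \<Longrightarrow> x \<in> X"
  shows "weighted_source t vol_exp (cutoff n) (B (n\<^sup>2))
    \<le> (energy_factor t n * weighted_source t vol_exp (cutoff n) X powr al t) powr (1 / (1 - be t))"
proof -
  define E where "E = cutoff_energy (cutoff n) (la t) (B (n\<^sup>2))"
  define A where "A = weighted_source t vol_exp (cutoff n) X"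
  have "t \<le> 1" using t_bounds[OF t] by simp
  then have "weighted_source t vol_exp (cutoff n) (B (n\<^sup>2))
      \<le> (cross_const vol_exp * A powr al t * E powr ga t * gradient_const t powr (- be t)) powr (1 / (1 - be t))"
    unfolding A_def E_def using cutoff_support[OF n] cutoff_bounds vol_exp_ge_1 t
    by (intro key_estimate[OF finite_B X _ _ _ Xcov _ _ _ holder_exponents[OF t]]) auto
  also have "\<dots> \<le> (energy_factor t n * A powr al t) powr (1 / (1 - be t))"
  proof (intro powr_mono2)
    have "cross_const vol_exp * A powr al t * E powr ga t * gradient_const t powr (- be t)
        = (cross_const vol_exp * E powr ga t * gradient_const t powr (- be t)) * A powr al t"
      by (simp add: mult_ac)
    also have "\<dots> \<le> energy_factor t n * A powr al t"
      by (intro mult_right_mono) (auto simp: energy_factor_def E_def)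
    finally show "cross_const vol_exp * A powr al t * E powr ga t * gradient_const t powr (- be t)
        \<le> energy_factor t n * A powr al t" .
  qed (use be_lt_1[OF t] cross_const_nonneg vol_exp_ge_1 in auto)
  finally show ?thesis by (simp add: A_def)
qed

lemma source_ball_le:
  assumes n: "2 \<le> n" and t: "0 < t" "t \<le> t0"
  shows "weighted_source t vol_exp (cutoff n) (B (n\<^sup>2)) \<le> energy_factor t n powr vol_exp"
proof -
  define A where "A = weighted_source t vol_exp (cutoff n) (B (n\<^sup>2))"
  have "\<And>x y. adj mu x y \<Longrightarrow> cutoff n y < cutoff n x \<Longrightarrow> x \<in> B (n\<^sup>2)"
    using cutoff_decrease_in_annulus[OF n] annulus_subset_B by blast
  then have "A \<le> (energy_factor t n * A powr al t) powr (1 / (1 - be t))"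
    unfolding A_def by (rule key_estimate_cutoff[OF n t order_refl])
  then have "A \<le> energy_factor t n powr (1 / ga t)"
    using holder_exponents[OF t] energy_factor_ge_1 weighted_source_nonneg unfolding A_def
    by (intro le_powr_inverse_if_le_self_powr[of _ _ "al t" "ga t" "be t"]) auto
  also have "\<dots> \<le> energy_factor t n powr vol_exp"
    using vol_exp_ga[OF t] energy_factor_ge_1 ga_pos[OF t]
    by (intro powr_mono) (auto simp: field_simps)
  finally show ?thesis by (simp add: A_def)
qed

lemma source_ball_le_annulus:
  assumes n: "2 \<le> n" and t: "0 < t" "t \<le> t0"
  shows "weighted_source t vol_exp (cutoff n) (B (n\<^sup>2))
    \<le> energy_factor t n powr vol_exp * weighted_source t vol_exp (cutoff n) (annulus n) powr (al t / (1 - be t))"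
proof -
  define AX where "AX = weighted_source t vol_exp (cutoff n) (annulus n)"
  have "weighted_source t vol_exp (cutoff n) (B (n\<^sup>2)) \<le> (energy_factor t n * AX powr al t) powr (1 / (1 - be t))"
    unfolding AX_def using cutoff_decrease_in_annulus[OF n]
    by (intro key_estimate_cutoff[OF n t annulus_subset_B]) auto
  also have "\<dots> = energy_factor t n powr (1 / (1 - be t)) * AX powr (al t / (1 - be t))"
    using energy_factor_ge_1[of t n] weighted_source_nonneg by (simp add: AX_def powr_mult powr_powr)
  also have "\<dots> \<le> energy_factor t n powr vol_exp * AX powr (al t / (1 - be t))"
    using inverse_one_minus_be_le[OF t] energy_factor_ge_1[of t n] by (intro mult_right_mono powr_mono) auto
  finally show ?thesis by (simp add: AX_def)
qed

end

context critical_growth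
begin

definition tcrit :: "nat \<Rightarrow> real" where
  "tcrit n = 1 / ln (real n)"

definition energy_const :: real where
  "energy_const = Cw * exp (2 * ((m - q) / rho)) * 2 powr log_exp * (1 + 2 * vol_exp) * exp (1 / rho)"

definition factor_bound :: real where
  "factor_bound = max 1 (cross_const vol_exp * max 1 energy_const * (2 * K\<^sup>2 * p0))"

definition crude_const :: real where
  "crude_const = max 1 (cross_const vol_exp * max 1 Cw * gradient_const t0 powr (- be t0))"

text \<open>The choice \<open>t = 1 / ln n\<close> keeps \<open>n powr (vol_exp - la t)\<close> and \<open>ln n powr t\<close> bounded: this is
  where the critical exponents of the volume bound are used.\<close>

lemma tcrit_powr_bounds:
  assumes n: "3 \<le> n" and t0: "tcrit n \<le> t0"
  shows "real n powr (2 * (vol_exp - la (tcrit n))) = exp (2 * ((m - q) / rho))"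
    and "ln (real n) powr (tcrit n / rho) \<le> exp (1 / rho)"
proof -
  define L where "L = ln (real n)"
  have L: "1 \<le> L" using one_le_ln_of_nat[OF n] by (simp add: L_def)
  have t: "0 < tcrit n" "tcrit n \<le> t0" using t0 L by (auto simp: tcrit_def L_def)
  have tL: "tcrit n * L = 1" using L by (simp add: tcrit_def L_def)
  have "(vol_exp - la (tcrit n)) * L = (m - q) / rho * (tcrit n * L)"
    by (simp add: vol_exp_minus_la[OF t])
  then have e: "(vol_exp - la (tcrit n)) * L = (m - q) / rho"
    using tL by simp
  have "real n powr (2 * (vol_exp - la (tcrit n))) = exp (2 * ((vol_exp - la (tcrit n)) * L))"
    using n by (simp add: powr_def L_def mult_ac)
  then show "real n powr (2 * (vol_exp - la (tcrit n))) = exp (2 * ((m - q) / rho))"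
    by (simp only: e)
  have "tcrit n * ln L \<le> tcrit n * L" using t L ln_bound[of L] by (intro mult_left_mono) auto
  then have "tcrit n / rho * ln L \<le> 1 / rho" using rho_pos tL by (simp add: divide_right_mono)
  then show "ln (real n) powr (tcrit n / rho) \<le> exp (1 / rho)"
    using L by (simp add: powr_def L_def)
qed

lemma cutoff_energy_critical_le:
  assumes n: "3 \<le> n" "n1 \<le> n" and t0: "tcrit n \<le> t0"
  shows "cutoff_energy (cutoff n) (la (tcrit n)) (B (n\<^sup>2)) * ln (real n) powr ka (tcrit n) \<le> energy_const"
proof -
  define L where "L = ln (real n)"
  define t where "t = tcrit n"
  define c where "c = Cw * exp (2 * ((m - q) / rho)) * 2 powr log_exp"
  have L: "1 \<le> L" using one_le_ln_of_nat[OF n(1)] by (simp add: L_def)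
  have t: "0 < t" "t \<le> t0" using t0 L by (auto simp: t_def tcrit_def L_def)
  have "Cw * real n powr (2 * (vol_exp - la t)) * (2 * L) powr log_exp = c * L powr log_exp"
    using L tcrit_powr_bounds(1)[OF n(1) t0] by (simp add: c_def t_def powr_mult)
  then have "cutoff_energy (cutoff n) (la t) (B (n\<^sup>2)) \<le> L powr (- la t) * (c * L powr log_exp) * (1 + 2 * la t * L)"
    using cutoff_energy_le_levels[of n "la t" "n\<^sup>2"] n la_pos[OF t] la_le[OF t] log_exp_nonneg Cw_pos
      log_cutoff_energy_le[OF n Cw_pos W_le_exp, of "la t"]
    by (simp add: L_def)
  also have "\<dots> \<le> L powr (- la t) * (c * L powr log_exp) * ((1 + 2 * vol_exp) * L)"
  proof -
    have "2 * la t * L \<le> 2 * vol_exp * L"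
      using la_le[OF t] L by (intro mult_right_mono) auto
    moreover have "(1 + 2 * vol_exp) * L = L + 2 * vol_exp * L"
      by (simp add: algebra_simps)
    ultimately have "1 + 2 * la t * L \<le> (1 + 2 * vol_exp) * L"
      using L by linarith
    then show ?thesis
      using Cw_pos by (intro mult_left_mono) (auto simp: c_def)
  qed
  finally have "cutoff_energy (cutoff n) (la t) (B (n\<^sup>2)) * L powr ka t
      \<le> c * (1 + 2 * vol_exp) * (L powr ka t * L powr (- la t) * L powr log_exp * L powr 1)"
    using L by (simp add: mult_right_mono mult_ac)
  also have "\<dots> = c * (1 + 2 * vol_exp) * L powr (ka t - la t + log_exp + 1)"
    by (simp only: diff_conv_add_uminus powr_add)
  also have "\<dots> = c * (1 + 2 * vol_exp) * L powr (t / rho)"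
    by (simp add: ka_exp[OF t])
  also have "\<dots> \<le> c * (1 + 2 * vol_exp) * exp (1 / rho)"
    using tcrit_powr_bounds(2)[OF n(1) t0] Cw_pos vol_exp_ge_1
    by (intro mult_left_mono) (auto simp: c_def t_def L_def)
  finally show ?thesis by (simp add: energy_const_def c_def t_def L_def)
qed

lemma energy_factor_critical_le:
  assumes n: "3 \<le> n" "n1 \<le> n" and t0: "tcrit n \<le> t0"
  shows "energy_factor (tcrit n) n \<le> factor_bound"
proof -
  define L where "L = ln (real n)"
  define t where "t = tcrit n"
  define c where "c = 2 * K\<^sup>2 * p0"
  define E where "E = cutoff_energy (cutoff n) (la t) (B (n\<^sup>2))"
  have L: "1 \<le> L" using one_le_ln_of_nat[OF n(1)] by (simp add: L_def)
  have t: "0 < t" "t \<le> t0" using t0 L by (auto simp: t_def tcrit_def L_def)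
  have "1 * 1 \<le> K\<^sup>2 * p0"
    using K_ge_1 p0_gt_1 by (intro mult_mono) (auto simp: one_le_power)
  then have c: "1 \<le> c" by (simp add: c_def)
  have "gradient_const t = inverse (L * c)"
    by (simp add: gradient_const_def t_def tcrit_def L_def c_def field_simps)
  then have "gradient_const t powr (- be t) = (L * c) powr be t"
    using L c by (simp add: powr_def ln_inverse ln_mult algebra_simps)
  then have "gradient_const t powr (- be t) = L powr be t * c powr be t"
    using L c by (simp add: powr_mult)
  moreover have "E powr ga t * L powr be t = (E * L powr ka t) powr ga t"
    using cutoff_energy_nonneg ga_ka[OF t] by (simp add: E_def powr_mult powr_powr mult.commute)
  ultimately have "cross_const vol_exp * E powr ga t * gradient_const t powr (- be t)
      = cross_const vol_exp * (E * L powr ka t) powr ga t * c powr be t"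
    by (simp add: mult.assoc)
  also have "\<dots> \<le> cross_const vol_exp * max 1 energy_const * c"
  proof (intro mult_mono mult_left_mono)
    have "(E * L powr ka t) powr ga t \<le> max 1 (E * L powr ka t)"
      using holder_exponents[OF t] E_def cutoff_energy_nonneg by (intro powr_le_max_1) auto
    also have "\<dots> \<le> max 1 energy_const"
      using cutoff_energy_critical_le[OF n t0] by (simp add: E_def t_def L_def)
    finally show "(E * L powr ka t) powr ga t \<le> max 1 energy_const" .
    show "c powr be t \<le> c"
      using c be_lt_1[OF t] be_pos[OF t] powr_mono[of "be t" 1 c] by simp
  qed (use cross_const_nonneg vol_exp_ge_1 c in auto)
  finally show ?thesis
    by (simp add: energy_factor_def factor_bound_def E_def c_def t_def)
qed

lemma energy_factor_t0_le:
  assumes N: "2 \<le> N" "n1 \<le> N\<^sup>2"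
  shows "energy_factor t0 N \<le> crude_const * real (N\<^sup>2) powr (vol_exp + log_exp)"
proof -
  have t: "0 < t0" "t0 \<le> t0" using t0_pos by auto
  define X where "X = real (N\<^sup>2) powr (vol_exp + log_exp)"
  define E where "E = cutoff_energy (cutoff N) (la t0) (B (N\<^sup>2))"
  have N2: "1 \<le> real (N\<^sup>2)" using N by simp
  have X: "1 \<le> X"
    unfolding X_def using N2 vol_exp_ge_1 log_exp_nonneg by (intro ge_one_powr_ge_zero) auto
  have "E \<le> W mu x0 (N\<^sup>2)"
    unfolding E_def using N la_pos[OF t] by (intro cutoff_energy_le_W) auto
  also have "\<dots> \<le> Cw * real (N\<^sup>2) powr vol_exp * ln (real (N\<^sup>2)) powr log_exp"
    using W_le_exp[OF N(2)] by simp
  also have "\<dots> \<le> Cw * real (N\<^sup>2) powr vol_exp * real (N\<^sup>2) powr log_exp"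
    using N N2 log_exp_nonneg ln_bound[of "real (N\<^sup>2)"] Cw_pos by (intro mult_left_mono powr_mono2) auto
  also have "\<dots> = Cw * X" using N2 by (simp add: X_def powr_add)
  finally have "E \<le> Cw * X" .
  have "E powr ga t0 \<le> max 1 E"
    using holder_exponents[OF t] cutoff_energy_nonneg by (intro powr_le_max_1) (auto simp: E_def)
  also have "\<dots> \<le> max 1 Cw * X"
  proof -
    have "1 * 1 \<le> max 1 Cw * X" using X by (intro mult_mono) auto
    moreover have "Cw * X \<le> max 1 Cw * X" using X by (intro mult_right_mono) auto
    ultimately show ?thesis using \<open>E \<le> Cw * X\<close> by simp
  qed
  finally have "cross_const vol_exp * E powr ga t0 * gradient_const t0 powr (- be t0)
      \<le> cross_const vol_exp * (max 1 Cw * X) * gradient_const t0 powr (- be t0)"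
    using cross_const_nonneg vol_exp_ge_1 by (intro mult_right_mono mult_left_mono) auto
  also have "\<dots> = (cross_const vol_exp * max 1 Cw * gradient_const t0 powr (- be t0)) * X"
    by (simp add: mult_ac)
  also have "\<dots> \<le> crude_const * X" using X by (intro mult_right_mono) (auto simp: crude_const_def)
  moreover have "1 * 1 \<le> crude_const * X" using X by (intro mult_mono) (auto simp: crude_const_def)
  ultimately show ?thesis
    by (simp add: energy_factor_def E_def X_def)
qed

end

section \<open>Summability and vanishing of the source term\<close>

context critical_growth
begin

definition source_mass :: "nat \<Rightarrow> real" where
  "source_mass k = (\<Sum>x\<in>B k. vmeasure mu x * source x)"

definition annulus_mass :: "nat \<Rightarrow> real" where
  "annulus_mass n = (\<Sum>x\<in>annulus n. vmeasure mu x * source x)"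

definition annulus_source :: "nat \<Rightarrow> real" where
  "annulus_source n = weighted_source (tcrit n) vol_exp (cutoff n) (annulus n)"

definition admissible :: "nat \<Rightarrow> bool" where
  "admissible n \<longleftrightarrow> 3 \<le> n \<and> n1 \<le> n \<and> tcrit n \<le> t0"

definition growth_exp :: real where
  "growth_exp = 4 * (vol_exp + log_exp) * vol_exp"

definition split_const :: real where
  "split_const = exp ((growth_exp + 1) / t0)"

lemma tcrit_tendsto_0: "tcrit \<longlonglongrightarrow> 0"
proof -
  have "filterlim (\<lambda>n. ln (real n)) at_top sequentially"
    by (rule filterlim_compose[OF ln_at_top filterlim_real_sequentially])
  then have "(\<lambda>n. inverse (ln (real n))) \<longlonglongrightarrow> 0"
    by (rule tendsto_inverse_0_at_top)
  then show ?thesis by (simp add: tcrit_def[abs_def] divide_inverse)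
qed

lemma eventually_admissible: "eventually admissible sequentially"
  using order_tendstoD(2)[OF tcrit_tendsto_0 t0_pos] eventually_ge_at_top[of "max 3 n1"]
  by eventually_elim (simp add: admissible_def)

lemma admissible_tcrit:
  assumes "admissible n"
  shows "0 < tcrit n" "tcrit n \<le> t0" "2 \<le> n"
  using assms one_le_ln_of_nat[of n] by (auto simp: admissible_def tcrit_def)

lemma sum_B_le_weighted_source:
  assumes "2 \<le> n" "k \<le> n"
  shows "(\<Sum>x\<in>B k. vmeasure mu x * source x * u x powr (-t)) \<le> weighted_source t vol_exp (cutoff n) (B (n\<^sup>2))"
proof -
  have "B k \<subseteq> B (n\<^sup>2)"
    using assms by (intro B_mono) (simp add: power2_eq_square order_trans[OF _ le_square])
  then have "(\<Sum>x\<in>B k. vmeasure mu x * source x * u x powr (-t) * cutoff n x powr vol_exp)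
      \<le> weighted_source t vol_exp (cutoff n) (B (n\<^sup>2))"
    unfolding weighted_source_def using finite_B
    by (intro sum_mono2) (auto intro!: mult_nonneg_nonneg simp: vmeasure_nonneg source_nonneg)
  moreover have "cutoff n x = 1" if "x \<in> B k" for x
    using that assms by (intro cutoff_eq_1) (auto simp: mem_B_iff)
  ultimately show ?thesis by simp
qed

lemma tendsto_source_mass:
  "(\<lambda>n. \<Sum>x\<in>B k. vmeasure mu x * source x * u x powr (- tcrit n)) \<longlonglongrightarrow> source_mass k"
proof -
  have "(\<lambda>n. \<Sum>x\<in>B k. vmeasure mu x * source x * u x powr (- tcrit n))
      \<longlonglongrightarrow> (\<Sum>x\<in>B k. vmeasure mu x * source x * u x powr (- 0))"
    by (intro tendsto_sum tendsto_mult_left tendsto_powr tendsto_const tendsto_minus tcrit_tendsto_0)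
       (simp add: u_pos less_imp_neq[symmetric])
  then show ?thesis using u_pos by (simp add: source_mass_def less_imp_neq[symmetric])
qed

lemma source_mass_bounded: "source_mass k \<le> factor_bound powr vol_exp"
proof (rule tendsto_le[OF trivial_limit_sequentially tendsto_const tendsto_source_mass])
  show "\<forall>\<^sub>F n in sequentially. (\<Sum>x\<in>B k. vmeasure mu x * source x * u x powr (- tcrit n)) \<le> factor_bound powr vol_exp"
    using eventually_admissible eventually_ge_at_top[of k]
  proof eventually_elim
    case (elim n)
    note t = admissible_tcrit[OF elim(1)]
    have "(\<Sum>x\<in>B k. vmeasure mu x * source x * u x powr (- tcrit n)) \<le> energy_factor (tcrit n) n powr vol_exp"
      by (rule order_trans[OF sum_B_le_weighted_source[OF t(3) elim(2)] source_ball_le[OF t(3,1,2)]])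
    also have "\<dots> \<le> factor_bound powr vol_exp"
      using energy_factor_critical_le[of n] elim(1) energy_factor_ge_1[of "tcrit n" n] vol_exp_ge_1
      by (intro powr_mono2) (auto simp: admissible_def)
    finally show ?case .
  qed
qed

lemma annulus_mass_tendsto_0: "annulus_mass \<longlonglongrightarrow> 0"
proof -
  have "incseq source_mass"
    unfolding incseq_def source_mass_def using finite_B B_mono
    by (auto intro!: sum_mono2 mult_nonneg_nonneg simp: vmeasure_nonneg source_nonneg)
  moreover have "bdd_above (range source_mass)"
    using source_mass_bounded by (auto intro!: bdd_aboveI)
  ultimately obtain L where L: "source_mass \<longlonglongrightarrow> L"
    using LIMSEQ_incseq_SUP by blast
  have "strict_mono (\<lambda>n::nat. n\<^sup>2)" by (auto simp: strict_mono_def power_strict_mono)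
  then have "(\<lambda>n. source_mass (n\<^sup>2) - source_mass (n - 1)) \<longlonglongrightarrow> L - L"
    using LIMSEQ_subseq_LIMSEQ[OF L] filterlim_compose[OF L filterlim_minus_const_nat_at_top]
    by (intro tendsto_diff) (auto simp: o_def)
  moreover have "\<forall>\<^sub>F n in sequentially. source_mass (n\<^sup>2) - source_mass (n - 1) = annulus_mass n"
    using eventually_ge_at_top[of 1]
  proof eventually_elim
    case (elim n)
    have sub: "B (n - 1) \<subseteq> B (n\<^sup>2)"
      by (intro B_mono) (simp add: power2_eq_square order_trans[OF _ le_square])
    have "annulus n = B (n\<^sup>2) - B (n - 1)"
      using elim by (auto simp: annulus_def mem_B_iff)
    then show ?case
      using sum_diff[OF finite_B sub, of "\<lambda>x. vmeasure mu x * source x"]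
      by (simp add: annulus_mass_def source_mass_def)
  qed
  ultimately show ?thesis by (simp add: Lim_transform_eventually)
qed

lemma source_t0_ball_le:
  assumes "admissible n"
  shows "(\<Sum>x\<in>B (n\<^sup>2). vmeasure mu x * source x * u x powr (- t0)) \<le> crude_const powr vol_exp * real n powr growth_exp"
proof -
  have n: "2 \<le> n\<^sup>2" "n1 \<le> (n\<^sup>2)\<^sup>2" "n\<^sup>2 \<le> n\<^sup>2"
    using assms by (auto simp: admissible_def power2_eq_square intro: order_trans[OF _ le_square])
  have "(\<Sum>x\<in>B (n\<^sup>2). vmeasure mu x * source x * u x powr (- t0)) \<le> energy_factor t0 (n\<^sup>2) powr vol_exp"
    by (rule order_trans[OF sum_B_le_weighted_source[OF n(1,3)] source_ball_le[OF n(1) t0_pos order_refl]])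
  also have "\<dots> \<le> (crude_const * real ((n\<^sup>2)\<^sup>2) powr (vol_exp + log_exp)) powr vol_exp"
    using energy_factor_t0_le[OF n(1,2)] energy_factor_ge_1[of t0 "n\<^sup>2"] vol_exp_ge_1
    by (intro powr_mono2) auto
  also have "\<dots> = crude_const powr vol_exp * real n powr growth_exp"
  proof -
    have "real ((n\<^sup>2)\<^sup>2) = real n powr 4"
      using assms by (simp add: admissible_def powr_numeral flip: power_mult)
    then have "real ((n\<^sup>2)\<^sup>2) powr (vol_exp + log_exp) = real n powr (4 * (vol_exp + log_exp))"
      by (simp only: powr_powr)
    then show ?thesis
      by (simp add: powr_mult powr_powr growth_exp_def crude_const_def)
  qed
  finally show ?thesis .
qed

text \<open>Split at the level \<open>\<theta> = n powr (- (growth_exp + 1) / t0)\<close>: for \<open>y \<ge> \<theta>\<close> the power is bounded because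
  \<open>t * ln n = 1\<close>, and for \<open>y < \<theta>\<close> the factor \<open>\<theta> powr t0\<close> beats the polynomial bound of
  \<open>source_t0_ball_le\<close>.\<close>

lemma powr_neg_tcrit_le:
  assumes "admissible n" "0 < y"
  shows "y powr (- tcrit n) \<le> split_const + split_const * real n powr (- (growth_exp + 1)) * y powr (- t0)"
proof -
  note t = admissible_tcrit[OF assms(1)]
  define e where "e = growth_exp + 1"
  define \<theta> where "\<theta> = real n powr (- e / t0)"
  have n: "0 < real n" using t by simp
  have "\<theta> powr (- tcrit n) = exp (e / t0 * (tcrit n * ln (real n)))"
    using n by (simp add: \<theta>_def powr_powr powr_def mult_ac)
  also have "tcrit n * ln (real n) = 1"
    using t by (simp add: tcrit_def)
  finally have \<theta>1: "\<theta> powr (- tcrit n) = split_const"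
    by (simp add: split_const_def e_def)
  have "\<theta> powr (t0 - tcrit n) = \<theta> powr (- tcrit n) * \<theta> powr t0"
    by (simp add: powr_add[symmetric])
  also have "\<theta> powr t0 = real n powr (- e)"
    using n t0_pos by (simp add: \<theta>_def powr_powr)
  finally have "\<theta> powr (t0 - tcrit n) = split_const * real n powr (- e)"
    using \<theta>1 by simp
  then show ?thesis
    using powr_neg_split_le[OF assms(2) t(1,2), of \<theta>] n \<theta>1 by (simp add: \<theta>_def e_def)
qed

lemma annulus_source_le:
  assumes "admissible n"
  shows "annulus_source n \<le> split_const * annulus_mass n + split_const * crude_const powr vol_exp * (1 / real n)"
proof -
  define e where "e = growth_exp + 1"
  have n: "0 < real n" using admissible_tcrit[OF assms] by simp
  have "annulus_source n
      \<le> (\<Sum>x\<in>annulus n. split_const * (vmeasure mu x * source x)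
          + split_const * real n powr (- e) * (vmeasure mu x * source x * u x powr (- t0)))"
    unfolding annulus_source_def weighted_source_def
  proof (intro sum_mono)
    fix x
    have "cutoff n x powr vol_exp \<le> 1"
      using cutoff_bounds[of n x] vol_exp_ge_1 by (intro powr_le1) auto
    then have "vmeasure mu x * source x * u x powr (- tcrit n) * cutoff n x powr vol_exp
        \<le> vmeasure mu x * source x * u x powr (- tcrit n)"
      using vmeasure_nonneg[of x] source_nonneg[of x] by (simp add: mult_left_le)
    also have "\<dots> \<le> vmeasure mu x * source x * (split_const + split_const * real n powr (- e) * u x powr (- t0))"
      using powr_neg_tcrit_le[OF assms u_pos[of x]] vmeasure_nonneg[of x] source_nonneg[of x]
      by (simp add: e_def mult_left_mono)
    finally show "vmeasure mu x * source x * u x powr (- tcrit n) * cutoff n x powr vol_exp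
        \<le> split_const * (vmeasure mu x * source x)
          + split_const * real n powr (- e) * (vmeasure mu x * source x * u x powr (- t0))"
      by (simp add: algebra_simps)
  qed
  also have "\<dots> = split_const * annulus_mass n
      + split_const * real n powr (- e) * (\<Sum>x\<in>annulus n. vmeasure mu x * source x * u x powr (- t0))"
    by (simp add: sum.distrib sum_distrib_left annulus_mass_def)
  also have "\<dots> \<le> split_const * annulus_mass n
      + split_const * (real n powr (- e) * (crude_const powr vol_exp * real n powr growth_exp))"
  proof -
    have "(\<Sum>x\<in>annulus n. vmeasure mu x * source x * u x powr (- t0))
        \<le> (\<Sum>x\<in>B (n\<^sup>2). vmeasure mu x * source x * u x powr (- t0))"
      using annulus_subset_B finite_B
      by (intro sum_mono2) (auto intro!: mult_nonneg_nonneg simp: vmeasure_nonneg source_nonneg)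
    then show ?thesis
      using source_t0_ball_le[OF assms] by (simp add: split_const_def mult_left_mono)
  qed
  also have "real n powr (- e) * (crude_const powr vol_exp * real n powr growth_exp)
      = crude_const powr vol_exp * (real n powr (- e) * real n powr growth_exp)"
    by (simp only: mult.left_commute)
  also have "real n powr (- e) * real n powr growth_exp = 1 / real n"
    using n by (simp add: e_def powr_minus_divide flip: powr_add)
  finally show ?thesis by (simp add: mult.assoc)
qed

lemma annulus_source_tendsto_0: "annulus_source \<longlonglongrightarrow> 0"
proof (rule tendsto_sandwich)
  show "\<forall>\<^sub>F n in sequentially. 0 \<le> annulus_source n"
    by (simp add: annulus_source_def weighted_source_nonneg)
  show "\<forall>\<^sub>F n in sequentially. annulus_source n \<le> split_const * annulus_mass n + split_const * crude_const powr vol_exp * (1 / real n)"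
    using eventually_admissible by eventually_elim (rule annulus_source_le)
  have "(\<lambda>n. split_const * annulus_mass n + split_const * crude_const powr vol_exp * (1 / real n))
      \<longlonglongrightarrow> split_const * 0 + split_const * crude_const powr vol_exp * 0"
    by (intro tendsto_intros annulus_mass_tendsto_0 lim_1_over_n)
  then show "(\<lambda>n. split_const * annulus_mass n + split_const * crude_const powr vol_exp * (1 / real n)) \<longlonglongrightarrow> 0"
    by simp
qed simp

lemma source_mass_eq_0: "source_mass k \<le> 0"
proof -
  define a where "a = (m - 1) / (2 * D0)"
  have a: "0 < a" using m_gt_1 D0_pos by (simp add: a_def)
  have "(\<lambda>n. factor_bound powr vol_exp * annulus_source n powr a) \<longlonglongrightarrow> factor_bound powr vol_exp * 0"
    by (intro tendsto_mult_left tendsto_zero_powrI[OF annulus_source_tendsto_0 tendsto_const _ a])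
       (simp add: annulus_source_def weighted_source_nonneg)
  moreover have "\<forall>\<^sub>F n in sequentially. (\<Sum>x\<in>B k. vmeasure mu x * source x * u x powr (- tcrit n))
      \<le> factor_bound powr vol_exp * annulus_source n powr a"
    using eventually_admissible order_tendstoD(2)[OF annulus_source_tendsto_0 zero_less_one] eventually_ge_at_top[of k]
  proof eventually_elim
    case (elim n)
    note t = admissible_tcrit[OF elim(1)]
    have "(\<Sum>x\<in>B k. vmeasure mu x * source x * u x powr (- tcrit n))
        \<le> energy_factor (tcrit n) n powr vol_exp * annulus_source n powr (al (tcrit n) / (1 - be (tcrit n)))"
      using order_trans[OF sum_B_le_weighted_source[OF t(3) elim(3)] source_ball_le_annulus[OF t(3,1,2)]]
      by (simp add: annulus_source_def)
    also have "\<dots> \<le> factor_bound powr vol_exp * annulus_source n powr a"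
    proof (intro mult_mono)
      show "energy_factor (tcrit n) n powr vol_exp \<le> factor_bound powr vol_exp"
        using energy_factor_critical_le[of n] elim(1) energy_factor_ge_1[of "tcrit n" n] vol_exp_ge_1
        by (intro powr_mono2) (auto simp: admissible_def)
      have "a \<le> al (tcrit n)" using al_ge[OF t(1,2)] by (simp add: a_def)
      also have "\<dots> \<le> al (tcrit n) / (1 - be (tcrit n))"
        using al_pos[OF t(1,2)] be_pos[OF t(1,2)] be_lt_1[OF t(1,2)] by (simp add: le_divide_eq)
      finally show "annulus_source n powr (al (tcrit n) / (1 - be (tcrit n))) \<le> annulus_source n powr a"
        using elim(2) by (intro powr_mono') (auto simp: annulus_source_def weighted_source_nonneg)
    qed auto
    finally show ?case .
  qed
  ultimately show ?thesis
    using tendsto_le[OF trivial_limit_sequentially _ tendsto_source_mass] by fastforce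
qed

lemma source_eq_0: "source z = 0"
proof -
  have "vmeasure mu z * source z \<le> source_mass (r z)"
    unfolding source_mass_def using finite_B
    by (intro member_le_sum) (auto simp: mem_B_iff vmeasure_nonneg source_nonneg)
  then have "vmeasure mu z * source z \<le> 0"
    using source_mass_eq_0[of "r z"] by linarith
  then show ?thesis
    using vmeasure_pos[of z] source_nonneg[of z] by (simp add: mult_le_0_iff)
qed

end

theorem theorem1p1:
  fixes mu :: "'v \<Rightarrow> 'v \<Rightarrow> real" and m p q :: real and x0 :: 'v
  assumes "weighted_graph mu"
    and "cond_p0 mu"
    and "m > 1"
    and "p \<ge> 0" and "m - 1 - p < q" and "q < m"
    and "\<exists>C::real. \<exists>n1::nat. C > 0 \<and> (\<forall>n::nat. n \<ge> n1 \<longrightarrow>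
           W mu x0 n \<le> C * real n powr ((m * p + q) / (p + q - m + 1))
                        * ln (real n) powr ((m - 1) / (p + q - m + 1)))"
  shows "\<not> (\<exists>u. nontrivial_pos_solution mu m p q u)"
proof
  assume "\<exists>u. nontrivial_pos_solution mu m p q u"
  then obtain u where u: "nontrivial_pos_solution mu m p q u" by blast
  obtain p0 where p0: "p0 > 1" "\<And>x y. adj mu x y \<Longrightarrow> mu x y / vmeasure mu x \<ge> 1 / p0"
    using assms(2) unfolding cond_p0_def by blast
  obtain C n1 where "C > 0" "\<And>n. n \<ge> n1 \<Longrightarrow> W mu x0 n \<le> C * real n powr ((m * p + q) / (p + q - m + 1))
      * ln (real n) powr ((m - 1) / (p + q - m + 1))"
    using assms(7) by blast
  then interpret critical_growth mu x0 m p q p0 u C n1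
    using assms(1,3-6) p0 u by unfold_locales auto
  show False
    using ex_source_ne_0 source_eq_0 by blast
qed

end
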